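(* Let $D$ be an integral domain and $\star$ a semistar operation on $D$. The following are equivalent: (i) for every overring $T$ of $D$ and every semistar operation $\star'$ on $T$ such that $T$ is $(\star,\star')$-linked to $D$, the ring $T^{\widetilde{\star'}}$ is integrally closed; (ii) for every overring $T$ of $D$, $T^{\ell_{\star,T}}$ is integrally closed; (iii) every overring of $D$ that is $t$-linked to $(D,\star)$ is integrally closed; (iv) every overring $T$ of $D$ that is $(\star,d_T)$-linked to $D$ is integrally closed; (v) $D^{\tilde\star}$ is integrally closed and, for every overring $T$ and every semistar operation $\star'$ on $T$ such that $T$ is $(\star,\star')$-linked to $D$, $T^{\widetilde{\star'}}$ is seminormal; (vi) $D^{\tilde\star}$ is integrally closed and every overring of $D$ that is $t$-linked to $(D,\star)$ is seminormal; (vii) $D^{\tilde\star}$ is integrally closed and every overring $T$ of $D$ that is $(\star,d_T)$-linked to $D$ is seminormal; (viii) $D$ is a P$\star$MD.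
   Context: Let $D$ be an integral domain with quotient field $K$. $\overline{\mathbf F}(D)$ denotes the set of all nonzero $D$-submodules of $K$ and $\mathbf f(D)$ the set of nonzero finitely generated $D$-submodules of $K$. A semistar operation on $D$ is a map $\star:\overline{\mathbf F}(D)\to\overline{\mathbf F}(D)$, $E\mapsto E^\star$, such that for all $0\ne x\in K$ and $E,F\in\overline{\mathbf F}(D)$: (1) $(xE)^\star=xE^\star$; (2) $E\subseteq F\Rightarrow E^\star\subseteq F^\star$; (3) $E\subseteq E^\star$ and $(E^\star)^\star=E^\star$. $\star_f$ is defined by $E^{\star_f}=\bigcup\{F^\star:F\in\mathbf f(D),F\subseteq E\}$. A nonzero ideal $I$ of $D$ is a quasi-$\star$-ideal if $I^\star\cap D=I$; a quasi-$\star$-prime is a prime quasi-$\star$-ideal; a quasi-$\star$-maximal ideal is a maximal element among proper quasi-$\star$-ideals; $\mathcal M(\star_f)$ is the set of quasi-$\star_f$-maximal ideals and $E^{\tilde\star}=\bigcap\{ED_Q:Q\in\mathcal M(\star_f)\}$ (equal to $K$ if $\mathcal M(\star_f)=\emptyset$). An overring of $D$ is a ring $T$ with $D\subseteq T\subseteq K$; all notions are defined analogously on $T$. $d_T$ is the identity operation on $T$; $v_T$ is $E\mapsto(T:_K(T:_KE))$ and $t_T:=(v_T)_f$. $T$ is $(\star,\star')$-linked to $D$ if for every nonzero finitely generated ideal $F\subseteq D$ with $F^\star=D^\star$ one has $(FT)^{\star'}=T^{\star'}$; $T$ is $t$-linked to $(D,\star)$ if it is $(\star,t_T)$-linked to $D$.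 The semistar operation $\ell_{\star,T}$ on $T$ is $E^{\ell_{\star,T}}=\bigcap\{ET_{D\setminus P}:P$ a quasi-$\star_f$-prime of $D\}$. $D$ is a P$\star$MD (Prüfer $\star$-multiplication domain) if every $F\in\mathbf f(D)$ satisfies $(FF^{-1})^{\star_f}=D^\star$, where $F^{-1}=(D:_KF)$. A domain $R$ with quotient field $K$ is seminormal if every $x\in K$ with $x^2,x^3\in R$ lies in $R$. *)

theory Defs
  imports "HOL-Computational_Algebra.Polynomial"
begin

text \<open>The quotient field K is modelled as the type 'K (a field); an integral domain D
  with quotient field K is a subring of 'K every element of which is a fraction a/b
  with a, b in D.\<close>

definition subring :: "'K::field set \<Rightarrow> bool" where
  "subring R \<longleftrightarrow> 0 \<in> R \<and> 1 \<in> R \<and> (\<forall>x\<in>R. \<forall>y\<in>R. x + y \<in> R \<and> x - y \<in> R \<and> x * y \<in> R)"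

definition domain_with_qf :: "'K::field set \<Rightarrow> bool" where
  "domain_with_qf D \<longleftrightarrow> subring D \<and> (\<forall>x. \<exists>a\<in>D. \<exists>b\<in>D. b \<noteq> 0 \<and> x = a / b)"

definition overring :: "'K::field set \<Rightarrow> 'K set \<Rightarrow> bool" where
  "overring D T \<longleftrightarrow> subring T \<and> D \<subseteq> T"

definition submod :: "'K::field set \<Rightarrow> 'K set \<Rightarrow> bool" where
  "submod T E \<longleftrightarrow> 0 \<in> E \<and> (\<forall>x\<in>E. \<forall>y\<in>E. x + y \<in> E) \<and> (\<forall>t\<in>T. \<forall>x\<in>E. t * x \<in> E)"

definition Fbar :: "'K::field set \<Rightarrow> 'K set set" where
  "Fbar T = {E. submod T E \<and> E \<noteq> {0}}"

definition span :: "'K::field set \<Rightarrow> 'K set \<Rightarrow> 'K set" where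
  "span T S = {\<Sum>s\<in>S. c s * s | c. \<forall>s. c s \<in> T}"

definition fgF :: "'K::field set \<Rightarrow> 'K set set" where
  "fgF T = {E \<in> Fbar T. \<exists>S. finite S \<and> E = span T S}"

definition setprod :: "'K::field set \<Rightarrow> 'K set \<Rightarrow> 'K set" where
  "setprod E F = {sum_list (map (\<lambda>(e, f). e * f) l) | l. set l \<subseteq> E \<times> F}"

definition semistar :: "'K::field set \<Rightarrow> ('K set \<Rightarrow> 'K set) \<Rightarrow> bool" where
  "semistar T st \<longleftrightarrow>
     (\<forall>E\<in>Fbar T. st E \<in> Fbar T) \<and>
     (\<forall>x E. x \<noteq> 0 \<longrightarrow> E \<in> Fbar T \<longrightarrow> st ((*) x ` E) = (*) x ` st E) \<and>
     (\<forall>E\<in>Fbar T. \<forall>F\<in>Fbar T. E \<subseteq> F \<longrightarrow> st E \<subseteq> st F) \<and>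
     (\<forall>E\<in>Fbar T. E \<subseteq> st E \<and> st (st E) = st E)"

definition star_f :: "'K::field set \<Rightarrow> ('K set \<Rightarrow> 'K set) \<Rightarrow> 'K set \<Rightarrow> 'K set" where
  "star_f T st E = \<Union> {st F | F. F \<in> fgF T \<and> F \<subseteq> E}"

definition ideal_of :: "'K::field set \<Rightarrow> 'K set \<Rightarrow> bool" where
  "ideal_of T I \<longleftrightarrow> submod T I \<and> I \<subseteq> T"

definition quasi_ideal :: "'K::field set \<Rightarrow> ('K set \<Rightarrow> 'K set) \<Rightarrow> 'K set \<Rightarrow> bool" where
  "quasi_ideal T st I \<longleftrightarrow> ideal_of T I \<and> I \<noteq> {0} \<and> st I \<inter> T = I"

definition prime_of :: "'K::field set \<Rightarrow> 'K set \<Rightarrow> bool" where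
  "prime_of T P \<longleftrightarrow> ideal_of T P \<and> P \<noteq> T \<and>
     (\<forall>x\<in>T. \<forall>y\<in>T. x * y \<in> P \<longrightarrow> x \<in> P \<or> y \<in> P)"

definition quasi_prime :: "'K::field set \<Rightarrow> ('K set \<Rightarrow> 'K set) \<Rightarrow> 'K set \<Rightarrow> bool" where
  "quasi_prime T st P \<longleftrightarrow> quasi_ideal T st P \<and> prime_of T P"

definition quasi_max :: "'K::field set \<Rightarrow> ('K set \<Rightarrow> 'K set) \<Rightarrow> 'K set \<Rightarrow> bool" where
  "quasi_max T st Q \<longleftrightarrow> quasi_ideal T st Q \<and> Q \<noteq> T \<and>
     (\<forall>I. quasi_ideal T st I \<and> I \<noteq> T \<and> Q \<subseteq> I \<longrightarrow> I = Q)"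

definition fracs :: "'K::field set \<Rightarrow> 'K set \<Rightarrow> 'K set" where
  "fracs T S = {t / s | t s. t \<in> T \<and> s \<in> S}"

text \<open>E^{tilde star} = intersection of E T_Q over quasi-star_f-maximal Q (K if none)\<close>
definition stilde :: "'K::field set \<Rightarrow> ('K set \<Rightarrow> 'K set) \<Rightarrow> 'K set \<Rightarrow> 'K set" where
  "stilde T st E = \<Inter> {setprod E (fracs T (T - Q)) | Q. quasi_max T (star_f T st) Q}"

definition colon :: "'K::field set \<Rightarrow> 'K set \<Rightarrow> 'K set" where
  "colon T E = {x. \<forall>e\<in>E. x * e \<in> T}"

definition v_op :: "'K::field set \<Rightarrow> 'K set \<Rightarrow> 'K set" where
  "v_op T E = colon T (colon T E)"

definition t_op :: "'K::field set \<Rightarrow> 'K set \<Rightarrow> 'K set" where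
  "t_op T = star_f T (v_op T)"

definition d_op :: "'K::field set \<Rightarrow> 'K set \<Rightarrow> 'K set" where
  "d_op T = (\<lambda>E. E)"

definition linked :: "'K::field set \<Rightarrow> ('K set \<Rightarrow> 'K set) \<Rightarrow> 'K set \<Rightarrow> ('K set \<Rightarrow> 'K set) \<Rightarrow> bool" where
  "linked D st T st' \<longleftrightarrow>
     (\<forall>F. F \<in> fgF D \<and> F \<subseteq> D \<and> st F = st D \<longrightarrow> st' (setprod F T) = st' T)"

definition t_linked :: "'K::field set \<Rightarrow> ('K set \<Rightarrow> 'K set) \<Rightarrow> 'K set \<Rightarrow> bool" where
  "t_linked D st T \<longleftrightarrow> linked D st T (t_op T)"

definition ell_op :: "'K::field set \<Rightarrow> ('K set \<Rightarrow> 'K set) \<Rightarrow> 'K set \<Rightarrow> 'K set \<Rightarrow> 'K set" where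
  "ell_op D st T E = \<Inter> {setprod E (fracs T (D - P)) | P. quasi_prime D (star_f D st) P}"

definition PstarMD :: "'K::field set \<Rightarrow> ('K set \<Rightarrow> 'K set) \<Rightarrow> bool" where
  "PstarMD D st \<longleftrightarrow> (\<forall>F\<in>fgF D. star_f D st (setprod F (colon D F)) = st D)"

definition integrally_closed :: "'K::field set \<Rightarrow> bool" where
  "integrally_closed R \<longleftrightarrow>
     (\<forall>x. (\<exists>p. lead_coeff p = 1 \<and> (\<forall>i. coeff p i \<in> R) \<and> poly p x = 0) \<longrightarrow> x \<in> R)"

definition seminormal :: "'K::field set \<Rightarrow> bool" where
  "seminormal R \<longleftrightarrow> (\<forall>x. x ^ 2 \<in> R \<and> x ^ 3 \<in> R \<longrightarrow> x \<in> R)"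

end

theory Submission
  imports Defs
begin

text \<open>All eight conditions are equivalent to: the localization \<open>D\<^sub>Q\<close> is a valuation ring
  for every quasi-\<open>\<star>\<^sub>f\<close>-maximal ideal \<open>Q\<close>.
  This is the classical description of P\<open>\<star>\<close>MDs: a generator of least value in \<open>D\<^sub>Q\<close>
  shows that \<open>FF\<^sup>-\<^sup>1\<close> escapes every such \<open>Q\<close>, and conversely \<open>(a,b)(a,b)\<^sup>-\<^sup>1\<close>
  escaping \<open>Q\<close> puts \<open>a/b\<close> or \<open>b/a\<close> into \<open>D\<^sub>Q\<close>.
  Linkedness makes every relevant prime of an overring \<open>T\<close> contract into some quasi-maximal
  \<open>Q\<close>, so \<open>T\<^sup>~\<^sup>\<star>\<^sup>'\<close>, \<open>T\<^sup>\<ell>\<close> and \<open>t\<close>-linked overrings are intersections of rings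
  containing a valuation ring \<open>D\<^sub>Q\<close>, hence integrally closed.
  Conversely, each condition makes \<open>D\<^sub>Q\<close> integrally closed with all overrings seminormal;
  applying seminormality to \<open>D\<^sub>Q[u\<^sup>2, u\<^sup>3]\<close> and Kaplansky's lemma on roots of polynomials
  with a unit coefficient over a local integrally closed domain shows that \<open>u\<close> or \<open>u\<^sup>-\<^sup>1\<close>
  lies in \<open>D\<^sub>Q\<close>.\<close>

section \<open>Submodules, spans and products\<close>

lemma subring_0: "subring R \<Longrightarrow> 0 \<in> R" by (simp add: subring_def)
lemma subring_1: "subring R \<Longrightarrow> 1 \<in> R" by (simp add: subring_def)
lemma subring_add: "subring R \<Longrightarrow> x \<in> R \<Longrightarrow> y \<in> R \<Longrightarrow> x + y \<in> R" by (simp add: subring_def)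
lemma subring_diff: "subring R \<Longrightarrow> x \<in> R \<Longrightarrow> y \<in> R \<Longrightarrow> x - y \<in> R" by (simp add: subring_def)
lemma subring_mult: "subring R \<Longrightarrow> x \<in> R \<Longrightarrow> y \<in> R \<Longrightarrow> x * y \<in> R" by (simp add: subring_def)

lemma subring_uminus: "subring R \<Longrightarrow> x \<in> R \<Longrightarrow> - x \<in> R"
  using subring_diff[of R 0 x] subring_0 by auto

lemma subring_sum: "subring R \<Longrightarrow> (\<And>i. i \<in> A \<Longrightarrow> f i \<in> R) \<Longrightarrow> sum f A \<in> R"
  by (induct A rule: infinite_finite_induct) (auto simp: subring_0 subring_add)

lemma subring_power: "subring R \<Longrightarrow> x \<in> R \<Longrightarrow> x ^ n \<in> R"
  by (induct n) (auto simp: subring_1 subring_mult)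

lemma subring_Inter: "(\<And>R. R \<in> A \<Longrightarrow> subring R) \<Longrightarrow> subring (\<Inter>A)"
  unfolding subring_def by blast

lemma submod_0: "submod R E \<Longrightarrow> 0 \<in> E" by (simp add: submod_def)
lemma submod_add: "submod R E \<Longrightarrow> x \<in> E \<Longrightarrow> y \<in> E \<Longrightarrow> x + y \<in> E" by (simp add: submod_def)
lemma submod_mult: "submod R E \<Longrightarrow> t \<in> R \<Longrightarrow> x \<in> E \<Longrightarrow> t * x \<in> E" by (simp add: submod_def)

lemma submod_sum: "submod R E \<Longrightarrow> (\<And>i. i \<in> A \<Longrightarrow> f i \<in> E) \<Longrightarrow> sum f A \<in> E"
  by (induct A rule: infinite_finite_induct) (auto simp: submod_0 submod_add)

lemma submod_subring: "subring R \<Longrightarrow> submod R R"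
  by (simp add: submod_def subring_def)

lemma subring_in_Fbar: "subring R \<Longrightarrow> R \<in> Fbar R"
  using subring_1[of R] by (auto simp: Fbar_def submod_subring)

lemma ideal_eq_if_one_mem: "ideal_of R I \<Longrightarrow> 1 \<in> I \<Longrightarrow> I = R"
  unfolding ideal_of_def submod_def by force

lemma ideal_contraction: "ideal_of T I \<Longrightarrow> subring D \<Longrightarrow> D \<subseteq> T \<Longrightarrow> ideal_of D (I \<inter> D)"
  unfolding ideal_of_def submod_def subring_def by auto

lemma span_memI: "\<forall>s. c s \<in> R \<Longrightarrow> z = (\<Sum>s\<in>S. c s * s) \<Longrightarrow> z \<in> span R S"
  unfolding span_def by auto

lemma span_memE:
  assumes "z \<in> span R S"
  obtains c where "\<forall>s. c s \<in> R" "z = (\<Sum>s\<in>S. c s * s)"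
  using assms unfolding span_def by auto

lemma span_subset: "submod R J \<Longrightarrow> S \<subseteq> J \<Longrightarrow> span R S \<subseteq> J"
  by (auto elim!: span_memE intro!: submod_sum submod_mult)

lemma mem_span:
  assumes "subring R" "finite S" "s \<in> S"
  shows "s \<in> span R S"
proof (rule span_memI)
  show "\<forall>x. (if x = s then 1 else 0) \<in> R"
    using assms by (simp add: subring_0 subring_1)
  show "s = (\<Sum>x\<in>S. (if x = s then 1 else 0) * x)"
    using assms by (simp add: if_distrib[of "\<lambda>c. c * _"] sum.delta cong: if_cong)
qed

lemma submod_span:
  assumes R: "subring R"
  shows "submod R (span R S)"
  unfolding submod_def
proof (intro conjI ballI)
  show "0 \<in> span R S"
    by (rule span_memI[of "\<lambda>_. 0"]) (simp_all add: subring_0[OF R])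
next
  fix x y assume x: "x \<in> span R S" and y: "y \<in> span R S"
  obtain c where c: "\<forall>s. c s \<in> R" "x = (\<Sum>s\<in>S. c s * s)" using x by (rule span_memE)
  obtain d where d: "\<forall>s. d s \<in> R" "y = (\<Sum>s\<in>S. d s * s)" using y by (rule span_memE)
  show "x + y \<in> span R S"
    by (rule span_memI[of "\<lambda>s. c s + d s"]) (simp_all add: c d R subring_add sum.distrib algebra_simps)
next
  fix t x assume t: "t \<in> R" and x: "x \<in> span R S"
  obtain c where c: "\<forall>s. c s \<in> R" "x = (\<Sum>s\<in>S. c s * s)" using x by (rule span_memE)
  show "t * x \<in> span R S"
    by (rule span_memI[of "\<lambda>s. t * c s"]) (simp_all add: c t R subring_mult sum_distrib_left algebra_simps)
qed

lemma span_mono: "subring R \<Longrightarrow> finite S' \<Longrightarrow> S \<subseteq> S' \<Longrightarrow> span R S \<subseteq> span R S'"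
  by (rule span_subset[OF submod_span]) (auto intro: mem_span)

lemma span_eq_0_iff:
  assumes "subring R" "finite S"
  shows "span R S = {0} \<longleftrightarrow> (\<forall>s\<in>S. s = 0)"
proof
  assume "span R S = {0}"
  then show "\<forall>s\<in>S. s = 0" using mem_span[OF assms] by blast
next
  assume "\<forall>s\<in>S. s = 0"
  then have "span R S \<subseteq> {0}" by (auto elim!: span_memE intro!: sum.neutral)
  then show "span R S = {0}" using submod_0[OF submod_span[OF assms(1)]] by blast
qed

lemma span_in_fgF:
  assumes "subring R" "finite S" "s \<in> S" "s \<noteq> 0"
  shows "span R S \<in> fgF R"
proof -
  have "span R S \<noteq> {0}" using span_eq_0_iff[OF assms(1,2)] assms(3,4) by auto
  then show ?thesis unfolding fgF_def Fbar_def using submod_span[OF assms(1)] assms(2) by blast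
qed

lemma fgF_E:
  assumes R: "subring R" and G: "G \<in> fgF R"
  obtains S s where "finite S" "G = span R S" "s \<in> S" "s \<noteq> 0"
proof -
  obtain S where S: "finite S" "G = span R S" "G \<noteq> {0}"
    using G unfolding fgF_def Fbar_def by blast
  then obtain s where "s \<in> S" "s \<noteq> 0" using span_eq_0_iff[OF R S(1)] by auto
  with S show ?thesis using that by blast
qed

lemma fgF_in_Fbar: "G \<in> fgF R \<Longrightarrow> G \<in> Fbar R"
  unfolding fgF_def by auto

lemma submod_fgF: "G \<in> fgF R \<Longrightarrow> submod R G"
  unfolding fgF_def Fbar_def by auto

lemma span_image_mult:
  fixes y :: "'K::field"
  assumes "y \<noteq> 0"
  shows "span R ((*) y ` S) = (*) y ` span R S"
proof -
  have inj: "inj_on ((*) y) S" using assms by (auto simp: inj_on_def)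
  have sum_eq: "(\<Sum>s\<in>(*) y ` S. c s * s) = y * (\<Sum>s\<in>S. c (y * s) * s)" for c
    unfolding sum.reindex[OF inj] comp_def by (simp add: sum_distrib_left mult_ac)
  show ?thesis
  proof (intro equalityI subsetI)
    fix z assume "z \<in> span R ((*) y ` S)"
    then obtain c where c: "\<forall>s. c s \<in> R" "z = (\<Sum>s\<in>(*) y ` S. c s * s)" by (rule span_memE)
    have "(\<Sum>s\<in>S. c (y * s) * s) \<in> span R S" using c(1) by (intro span_memI) auto
    then show "z \<in> (*) y ` span R S" unfolding c(2) sum_eq by (rule imageI)
  next
    fix z assume "z \<in> (*) y ` span R S"
    then obtain w where w: "z = y * w" "w \<in> span R S" by blast
    then obtain c where c: "\<forall>s. c s \<in> R" "w = (\<Sum>s\<in>S. c s * s)" by (auto elim: span_memE)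
    have "z = (\<Sum>s\<in>(*) y ` S. c (s / y) * s)"
      unfolding sum_eq w(1) c(2) using assms by simp
    then show "z \<in> span R ((*) y ` S)" using c(1) by (intro span_memI) auto
  qed
qed

lemma setprod_subset:
  assumes "submod R W" "\<And>e f. e \<in> E \<Longrightarrow> f \<in> F \<Longrightarrow> e * f \<in> W"
  shows "setprod E F \<subseteq> W"
proof
  fix z assume "z \<in> setprod E F"
  then obtain l where l: "z = sum_list (map (\<lambda>(e, f). e * f) l)" "set l \<subseteq> E \<times> F"
    unfolding setprod_def by blast
  have "sum_list (map (\<lambda>(e, f). e * f) l) \<in> W" using l(2)
    by (induct l) (auto simp: assms(2) submod_0[OF assms(1)] submod_add[OF assms(1)])
  then show "z \<in> W" using l by simp
qed

lemma mult_mem_setprod: "e \<in> E \<Longrightarrow> f \<in> F \<Longrightarrow> e * f \<in> setprod E F"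
  unfolding setprod_def by (rule CollectI, rule exI[of _ "[(e, f)]"]) auto

lemma submod_setprod:
  assumes "submod R E"
  shows "submod R (setprod E F)"
  unfolding submod_def
proof (intro conjI ballI)
  show "0 \<in> setprod E F"
    unfolding setprod_def by (rule CollectI, rule exI[of _ "[]"]) auto
next
  fix x y assume "x \<in> setprod E F" "y \<in> setprod E F"
  then obtain l m where "x = sum_list (map (\<lambda>(e, f). e * f) l)" "set l \<subseteq> E \<times> F"
    "y = sum_list (map (\<lambda>(e, f). e * f) m)" "set m \<subseteq> E \<times> F"
    unfolding setprod_def by blast
  then show "x + y \<in> setprod E F"
    unfolding setprod_def by (intro CollectI exI[of _ "l @ m"]) auto
next
  fix t z assume t: "t \<in> R" and "z \<in> setprod E F"
  then obtain l where l: "z = sum_list (map (\<lambda>(e, f). e * f) l)" "set l \<subseteq> E \<times> F"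
    unfolding setprod_def by blast
  define l' where "l' = map (\<lambda>(e, f). (t * e, f)) l"
  have "set l' \<subseteq> E \<times> F"
    using l(2) submod_mult[OF assms t] by (auto simp: l'_def)
  moreover have "t * z = sum_list (map (\<lambda>(e, f). e * f) l')"
    unfolding l(1) l'_def
    by (induct l) (auto simp: algebra_simps)
  ultimately show "t * z \<in> setprod E F"
    unfolding setprod_def by blast
qed

lemma setprod_subring_eq:
  assumes "subring W" "T \<subseteq> W" "1 \<in> T"
  shows "setprod T W = W"
proof
  show "setprod T W \<subseteq> W"
    by (rule setprod_subset[OF submod_subring[OF assms(1)]]) (use assms in \<open>auto simp: subring_mult\<close>)
  show "W \<subseteq> setprod T W" using mult_mem_setprod[of 1 T _ W] assms by auto
qed

lemma setprod_span:
  assumes D: "subring D" and T: "subring T" "D \<subseteq> T" and S: "finite S"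
  shows "setprod (span D S) T = span T S"
proof
  show "setprod (span D S) T \<subseteq> span T S"
  proof (rule setprod_subset[OF submod_span[OF T(1)]])
    fix e f assume ef: "e \<in> span D S" "f \<in> T"
    then obtain c where c: "\<forall>s. c s \<in> D" "e = (\<Sum>s\<in>S. c s * s)" by (auto elim: span_memE)
    have "e * f = (\<Sum>s\<in>S. (c s * f) * s)"
      unfolding c(2) sum_distrib_right by (simp add: algebra_simps)
    then show "e * f \<in> span T S" using c(1) ef(2) T by (intro span_memI) (auto intro: subring_mult)
  qed
  show "span T S \<subseteq> setprod (span D S) T"
  proof
    fix z assume "z \<in> span T S"
    then obtain c where c: "\<forall>s. c s \<in> T" "z = (\<Sum>s\<in>S. c s * s)"
      by (rule span_memE)
    show "z \<in> setprod (span D S) T"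
      unfolding c(2) mult.commute[of "c _"]
      using c(1) by (intro submod_sum[OF submod_setprod[OF submod_span[OF D]]] mult_mem_setprod mem_span[OF D S]) auto
  qed
qed

section \<open>Semistar operations of finite type\<close>

lemma semistar_in_Fbar: "semistar R st \<Longrightarrow> E \<in> Fbar R \<Longrightarrow> st E \<in> Fbar R"
  by (simp add: semistar_def)
lemma semistar_mult: "semistar R st \<Longrightarrow> x \<noteq> 0 \<Longrightarrow> E \<in> Fbar R \<Longrightarrow> st ((*) x ` E) = (*) x ` st E"
  by (simp add: semistar_def)
lemma semistar_mono: "semistar R st \<Longrightarrow> E \<in> Fbar R \<Longrightarrow> F \<in> Fbar R \<Longrightarrow> E \<subseteq> F \<Longrightarrow> st E \<subseteq> st F"
  by (simp add: semistar_def)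
lemma semistar_extensive: "semistar R st \<Longrightarrow> E \<in> Fbar R \<Longrightarrow> E \<subseteq> st E"
  by (simp add: semistar_def)
lemma semistar_idem: "semistar R st \<Longrightarrow> E \<in> Fbar R \<Longrightarrow> st (st E) = st E"
  by (simp add: semistar_def)

lemma submod_semistar: "semistar R st \<Longrightarrow> E \<in> Fbar R \<Longrightarrow> submod R (st E)"
  using semistar_in_Fbar[of R st E] by (simp add: Fbar_def)

lemma one_mem_semistar: "subring R \<Longrightarrow> semistar R st \<Longrightarrow> 1 \<in> st R"
  using semistar_extensive subring_in_Fbar subring_1 by blast

lemma semistar_eq_if_one_mem:
  assumes R: "subring R" and st: "semistar R st" and G: "G \<in> Fbar R" "G \<subseteq> R" "1 \<in> st G"
  shows "st G = st R"
proof
  show "st G \<subseteq> st R" using assms by (intro semistar_mono[OF st] subring_in_Fbar)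
  have "R \<subseteq> st G"
    using submod_mult[OF submod_semistar[OF st G(1)] _ G(3)] by auto
  then have "st R \<subseteq> st (st G)"
    using assms by (intro semistar_mono[OF st] semistar_in_Fbar[OF st] subring_in_Fbar)
  then show "st R \<subseteq> st G" using semistar_idem[OF st G(1)] by simp
qed

lemma star_f_memI: "F \<in> fgF R \<Longrightarrow> F \<subseteq> E \<Longrightarrow> z \<in> st F \<Longrightarrow> z \<in> star_f R st E"
  unfolding star_f_def by blast

lemma star_f_memE:
  assumes "z \<in> star_f R st E"
  obtains F where "F \<in> fgF R" "F \<subseteq> E" "z \<in> st F"
  using assms unfolding star_f_def by blast

lemma star_f_mono: "E \<subseteq> E' \<Longrightarrow> star_f R st E \<subseteq> star_f R st E'"
  unfolding star_f_def by blast

lemma fgF_upper_bound: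
  assumes R: "subring R" and E: "submod R E" and A: "finite A" "A \<noteq> {}"
    and fg: "\<And>F. F \<in> A \<Longrightarrow> F \<in> fgF R \<and> F \<subseteq> E"
  obtains G where "G \<in> fgF R" "G \<subseteq> E" "\<forall>F\<in>A. F \<subseteq> G"
proof -
  have "\<forall>F\<in>A. \<exists>S. finite S \<and> F = span R S \<and> (\<exists>s\<in>S. s \<noteq> 0)"
  proof
    fix F assume "F \<in> A"
    then have "F \<in> fgF R" using fg by blast
    then obtain S s where "finite S" "F = span R S" "s \<in> S" "s \<noteq> 0" by (rule fgF_E[OF R])
    then show "\<exists>S. finite S \<and> F = span R S \<and> (\<exists>s\<in>S. s \<noteq> 0)" by blast
  qed
  then have "\<exists>S. \<forall>F\<in>A. finite (S F) \<and> F = span R (S F) \<and> (\<exists>s\<in>S F. s \<noteq> 0)"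
    by (rule bchoice)
  then obtain S where "\<forall>F\<in>A. finite (S F) \<and> F = span R (S F) \<and> (\<exists>s\<in>S F. s \<noteq> 0)"
    by (erule exE)
  then have S: "finite (S F) \<and> F = span R (S F) \<and> (\<exists>s\<in>S F. s \<noteq> 0)" if "F \<in> A" for F
    using that by blast
  define U where "U = (\<Union>F\<in>A. S F)"
  have U: "finite U" "\<exists>s\<in>U. s \<noteq> 0"
    using S A unfolding U_def by auto
  have "S F \<subseteq> E" if "F \<in> A" for F
  proof -
    have "S F \<subseteq> span R (S F)" using S[OF that] mem_span[OF R] by blast
    then show ?thesis using S[OF that] fg[OF that] by auto
  qed
  then have "U \<subseteq> E" unfolding U_def by blast
  then have "span R U \<subseteq> E" by (rule span_subset[OF E])
  moreover have "\<forall>F\<in>A. F \<subseteq> span R U"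
  proof
    fix F assume F: "F \<in> A"
    have "span R (S F) \<subseteq> span R U" using F by (intro span_mono[OF R U(1)]) (auto simp: U_def)
    then show "F \<subseteq> span R U" using S[OF F] by auto
  qed
  moreover obtain s where "s \<in> U" "s \<noteq> 0" using U(2) by blast
  then have "span R U \<in> fgF R" by (rule span_in_fgF[OF R U(1)])
  ultimately show ?thesis using that by blast
qed

lemma star_f_extensive:
  assumes R: "subring R" and st: "semistar R st" and E: "submod R E" "E \<noteq> {0}"
  shows "E \<subseteq> star_f R st E"
proof
  have principal: "span R {e} \<in> fgF R" "span R {e} \<subseteq> E" "e \<in> st (span R {e})"
    if "e \<in> E" "e \<noteq> 0" for e
  proof -
    show fg: "span R {e} \<in> fgF R" using span_in_fgF[OF R] that by auto
    show "span R {e} \<subseteq> E" using span_subset[OF E(1)] that by auto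
    show "e \<in> st (span R {e})"
      using semistar_extensive[OF st fgF_in_Fbar[OF fg]] mem_span[OF R] by auto
  qed
  fix z assume z: "z \<in> E"
  obtain e where e: "e \<in> E" "e \<noteq> 0" using E submod_0 by blast
  show "z \<in> star_f R st E"
  proof (cases "z = 0")
    case True
    then have "z \<in> st (span R {e})"
      using submod_0[OF submod_semistar[OF st fgF_in_Fbar[OF principal(1)[OF e]]]] by simp
    then show ?thesis using principal[OF e] by (blast intro: star_f_memI)
  next
    case False
    then show ?thesis using principal[OF z] by (blast intro: star_f_memI)
  qed
qed

lemma submod_star_f:
  assumes R: "subring R" and st: "semistar R st" and E: "submod R E" "E \<noteq> {0}"
  shows "submod R (star_f R st E)"
  unfolding submod_def
proof (intro conjI ballI)
  show "0 \<in> star_f R st E" using star_f_extensive[OF assms] submod_0[OF E(1)] by blast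
next
  fix x y assume "x \<in> star_f R st E" "y \<in> star_f R st E"
  then obtain F1 F2 where F1: "F1 \<in> fgF R" "F1 \<subseteq> E" "x \<in> st F1"
    and F2: "F2 \<in> fgF R" "F2 \<subseteq> E" "y \<in> st F2"
    by (metis star_f_memE)
  obtain G where "G \<in> fgF R" "G \<subseteq> E" "\<forall>F\<in>{F1, F2}. F \<subseteq> G"
    by (rule fgF_upper_bound[OF R E(1), of "{F1, F2}"]) (use F1 F2 in auto)
  then have G: "G \<in> fgF R" "G \<subseteq> E" "F1 \<subseteq> G" "F2 \<subseteq> G" by auto
  have "st F1 \<subseteq> st G" "st F2 \<subseteq> st G"
    using semistar_mono[OF st fgF_in_Fbar[OF F1(1)] fgF_in_Fbar[OF G(1)] G(3)]
      semistar_mono[OF st fgF_in_Fbar[OF F2(1)] fgF_in_Fbar[OF G(1)] G(4)] by auto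
  then have "x + y \<in> st G"
    using F1 F2 submod_add[OF submod_semistar[OF st fgF_in_Fbar[OF G(1)]]] by blast
  then show "x + y \<in> star_f R st E" using G by (blast intro: star_f_memI)
next
  fix t x assume t: "t \<in> R" and x: "x \<in> star_f R st E"
  from x obtain F where F: "F \<in> fgF R" "F \<subseteq> E" "x \<in> st F" by (rule star_f_memE)
  then have "t * x \<in> st F" using submod_mult[OF submod_semistar[OF st fgF_in_Fbar[OF F(1)]] t] by blast
  then show "t * x \<in> star_f R st E" using F by (blast intro: star_f_memI)
qed

lemma star_f_idem:
  assumes R: "subring R" and st: "semistar R st" and E: "submod R E"
  shows "star_f R st (star_f R st E) \<subseteq> star_f R st E"
proof
  fix z assume "z \<in> star_f R st (star_f R st E)"
  then obtain G where G: "G \<in> fgF R" "G \<subseteq> star_f R st E" "z \<in> st G" by (rule star_f_memE)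
  obtain S s0 where S: "finite S" "G = span R S" "s0 \<in> S" "s0 \<noteq> 0" using fgF_E[OF R G(1)] .
  have "\<exists>F. F \<in> fgF R \<and> F \<subseteq> E \<and> s \<in> st F" if "s \<in> S" for s
  proof -
    have "s \<in> G" unfolding S(2) by (rule mem_span[OF R S(1) that])
    with G(2) have "s \<in> star_f R st E" by blast
    then obtain F where "F \<in> fgF R" "F \<subseteq> E" "s \<in> st F" by (rule star_f_memE)
    then show ?thesis by blast
  qed
  then have "\<forall>s\<in>S. \<exists>F. F \<in> fgF R \<and> F \<subseteq> E \<and> s \<in> st F" by blast
  then have "\<exists>F. \<forall>s\<in>S. F s \<in> fgF R \<and> F s \<subseteq> E \<and> s \<in> st (F s)" by (rule bchoice)
  then obtain F where F: "\<forall>s\<in>S. F s \<in> fgF R \<and> F s \<subseteq> E \<and> s \<in> st (F s)" by (erule exE)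
  have "finite (F ` S)" "F ` S \<noteq> {}" "\<And>X. X \<in> F ` S \<Longrightarrow> X \<in> fgF R \<and> X \<subseteq> E"
    using F S by auto
  then obtain H where H: "H \<in> fgF R" "H \<subseteq> E" "\<forall>X\<in>F ` S. X \<subseteq> H"
    by (rule fgF_upper_bound[OF R E])
  have HF: "H \<in> Fbar R" using fgF_in_Fbar[OF H(1)] .
  have "S \<subseteq> st H"
  proof
    fix s assume s: "s \<in> S"
    then have "st (F s) \<subseteq> st H" using F H(3) by (intro semistar_mono[OF st fgF_in_Fbar HF]) auto
    then show "s \<in> st H" using F s by blast
  qed
  then have "G \<subseteq> st H" unfolding S(2) by (rule span_subset[OF submod_semistar[OF st HF]])
  then have "st G \<subseteq> st H"
    using semistar_mono[OF st fgF_in_Fbar[OF G(1)] semistar_in_Fbar[OF st HF]] semistar_idem[OF st HF]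
    by simp
  then show "z \<in> star_f R st E" using G(3) H by (blast intro: star_f_memI)
qed

lemma star_f_subset_semistar:
  assumes "subring R" "semistar R st" "E \<subseteq> R"
  shows "star_f R st E \<subseteq> st R"
proof
  fix z assume "z \<in> star_f R st E"
  then obtain F where F: "F \<in> fgF R" "F \<subseteq> E" "z \<in> st F" by (rule star_f_memE)
  have "st F \<subseteq> st R"
    using assms F by (intro semistar_mono[OF assms(2) fgF_in_Fbar subring_in_Fbar]) auto
  then show "z \<in> st R" using F by blast
qed

section \<open>Quasi-maximal ideals\<close>

lemma one_notin_star_f_quasi_max:
  assumes "subring R" "quasi_max R (star_f R st) Q"
  shows "1 \<notin> star_f R st Q"
proof
  assume "1 \<in> star_f R st Q"
  then have "1 \<in> Q" using assms subring_1 by (auto simp: quasi_max_def quasi_ideal_def)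
  then show False using assms ideal_eq_if_one_mem by (auto simp: quasi_max_def quasi_ideal_def)
qed

lemma quasi_max_ideal:
  assumes "quasi_max R (star_f R st) Q"
  shows "ideal_of R Q" "0 \<in> Q" "Q \<noteq> {0}"
  using assms by (auto simp: quasi_max_def quasi_ideal_def ideal_of_def submod_def)

lemma submod_Union_chain:
  assumes C: "C \<noteq> {}" "subset.chain A C" and sub: "\<And>J. J \<in> C \<Longrightarrow> submod R J"
  shows "submod R (\<Union>C)"
  unfolding submod_def
proof (intro conjI ballI)
  show "0 \<in> \<Union>C" using C sub submod_0 by blast
next
  fix x y assume "x \<in> \<Union>C" "y \<in> \<Union>C"
  then obtain J1 J2 where J: "J1 \<in> C" "J2 \<in> C" "x \<in> J1" "y \<in> J2" by blast
  then have "J1 \<subseteq> J2 \<or> J2 \<subseteq> J1" using C by (auto simp: subset.chain_def)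
  then have "x + y \<in> J1 \<or> x + y \<in> J2" using J sub by (metis submod_add subsetD)
  then show "x + y \<in> \<Union>C" using J by blast
next
  fix t x assume "t \<in> R" "x \<in> \<Union>C"
  then show "t * x \<in> \<Union>C" using sub submod_mult by blast
qed

lemma one_notin_star_f_Union_chain:
  assumes R: "subring R" and C: "C \<noteq> {}" "subset.chain A C"
    and sub: "\<And>J. J \<in> C \<Longrightarrow> submod R J" and one: "\<And>J. J \<in> C \<Longrightarrow> 1 \<notin> star_f R st J"
  shows "1 \<notin> star_f R st (\<Union>C)"
proof
  assume "1 \<in> star_f R st (\<Union>C)"
  then obtain G where G: "G \<in> fgF R" "G \<subseteq> \<Union>C" "1 \<in> st G" by (rule star_f_memE)
  obtain S s where S: "finite S" "G = span R S" using fgF_E[OF R G(1)] .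
  have "S \<subseteq> G" unfolding S(2) using mem_span[OF R S(1)] by blast
  then have "S \<subseteq> \<Union>C" using G(2) by blast
  then obtain J where J: "J \<in> C" "S \<subseteq> J" using finite_subset_Union_chain[OF S(1) _ C] by blast
  have "G \<subseteq> J" unfolding S(2) using J sub span_subset by blast
  then have "1 \<in> star_f R st J" using G by (blast intro: star_f_memI)
  then show False using J one by blast
qed

lemma quasi_max_if_maximal:
  assumes R: "subring R" and st: "semistar R st"
    and M: "ideal_of R M" "M \<noteq> {0}" "1 \<notin> star_f R st M"
    and max: "\<And>J. ideal_of R J \<Longrightarrow> M \<subseteq> J \<Longrightarrow> 1 \<notin> star_f R st J \<Longrightarrow> J = M"
  shows "quasi_max R (star_f R st) M"
proof -
  have Msub: "submod R M" using M by (simp add: ideal_of_def)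
  define Q where "Q = star_f R st M \<inter> R"
  have "ideal_of R Q"
    using submod_star_f[OF R st Msub M(2)] submod_subring[OF R]
    by (auto simp: Q_def ideal_of_def submod_def)
  moreover have MQ: "M \<subseteq> Q" using star_f_extensive[OF R st Msub M(2)] M(1) by (auto simp: Q_def ideal_of_def)
  moreover have "star_f R st Q \<subseteq> star_f R st M"
    using star_f_mono[of Q "star_f R st M" R st] star_f_idem[OF R st Msub] by (auto simp: Q_def)
  then have "1 \<notin> star_f R st Q" using M(3) by blast
  ultimately have QM: "Q = M" by (rule max)
  then have "quasi_ideal R (star_f R st) M" using M by (auto simp: quasi_ideal_def Q_def)
  moreover have "M \<noteq> R" using MQ QM M(3) subring_1[OF R] by (auto simp: Q_def)
  moreover have "J = M" if J: "quasi_ideal R (star_f R st) J" "J \<noteq> R" "M \<subseteq> J" for J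
  proof (rule max)
    show "1 \<notin> star_f R st J"
      using J subring_1[OF R] ideal_eq_if_one_mem by (auto simp: quasi_ideal_def)
  qed (use J in \<open>auto simp: quasi_ideal_def\<close>)
  ultimately show ?thesis by (auto simp: quasi_max_def)
qed

lemma quasi_max_exists:
  assumes R: "subring R" and st: "semistar R st"
    and I: "ideal_of R I" "I \<noteq> {0}" "1 \<notin> star_f R st I"
  obtains Q where "quasi_max R (star_f R st) Q" "I \<subseteq> Q"
proof -
  define A where "A = {J. ideal_of R J \<and> I \<subseteq> J \<and> 1 \<notin> star_f R st J}"
  have "A \<noteq> {}" using I by (auto simp: A_def)
  moreover have "\<Union>C \<in> A" if C: "C \<noteq> {}" "subset.chain A C" for C
  proof -
    have CA: "ideal_of R J" "I \<subseteq> J" "1 \<notin> star_f R st J" if "J \<in> C" for J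
      using C that by (auto simp: subset.chain_def A_def)
    have "submod R (\<Union>C)" using CA by (intro submod_Union_chain[OF C]) (simp add: ideal_of_def)
    moreover have "1 \<notin> star_f R st (\<Union>C)"
      using CA by (intro one_notin_star_f_Union_chain[OF R C]) (simp_all add: ideal_of_def)
    moreover have "\<Union>C \<subseteq> R" using CA(1) by (auto simp: ideal_of_def)
    moreover have "I \<subseteq> \<Union>C" using C(1) CA(2) by blast
    ultimately show ?thesis by (simp add: A_def ideal_of_def)
  qed
  ultimately obtain M where M: "M \<in> A" "\<And>X. X \<in> A \<Longrightarrow> M \<subseteq> X \<Longrightarrow> X = M"
    using subset_Zorn_nonempty[of A] by blast
  then have "I \<subseteq> M" "M \<noteq> {0}" using I by (auto simp: A_def ideal_of_def submod_def)
  moreover have "quasi_max R (star_f R st) M"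
  proof (rule quasi_max_if_maximal[OF R st])
    show "ideal_of R M" "M \<noteq> {0}" "1 \<notin> star_f R st M" using M(1) \<open>M \<noteq> {0}\<close> by (auto simp: A_def)
    show "J = M" if "ideal_of R J" "M \<subseteq> J" "1 \<notin> star_f R st J" for J
      using M that \<open>I \<subseteq> M\<close> by (auto simp: A_def)
  qed
  ultimately show ?thesis using that by blast
qed

lemma image_mult_fgF:
  assumes R: "subring R" and G: "G \<in> fgF R" and y: "y \<noteq> 0"
  shows "(*) y ` G \<in> fgF R"
proof -
  obtain S s where S: "finite S" "G = span R S" "s \<in> S" "s \<noteq> 0" using fgF_E[OF R G] .
  have "span R ((*) y ` S) \<in> fgF R"
    using S y by (intro span_in_fgF[OF R, of _ "y * s"]) auto
  then show ?thesis unfolding S(2) span_image_mult[OF y] .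
qed

lemma ideal_add_principal:
  assumes R: "subring R" and Q: "ideal_of R Q" and x: "x \<in> R"
  shows "ideal_of R {q + x * r | q r. q \<in> Q \<and> r \<in> R}" (is "ideal_of R ?J")
  unfolding ideal_of_def submod_def
proof (intro conjI ballI)
  have Qs: "submod R Q" "Q \<subseteq> R" using Q by (auto simp: ideal_of_def)
  show "0 \<in> ?J" using submod_0[OF Qs(1)] subring_0[OF R] by force
  show "?J \<subseteq> R" using Qs(2) x by (auto intro!: subring_add[OF R] subring_mult[OF R])
  fix a b assume "a \<in> ?J" "b \<in> ?J"
  then obtain q1 r1 q2 r2 where "a = q1 + x * r1" "b = q2 + x * r2" "q1 \<in> Q" "q2 \<in> Q" "r1 \<in> R" "r2 \<in> R"
    by blast
  moreover then have "a + b = (q1 + q2) + x * (r1 + r2)" by (simp add: algebra_simps)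
  ultimately show "a + b \<in> ?J" using submod_add[OF Qs(1)] subring_add[OF R] by blast
next
  have Qs: "submod R Q" using Q by (auto simp: ideal_of_def)
  fix t a assume t: "t \<in> R" and "a \<in> ?J"
  then obtain q r where "a = q + x * r" "q \<in> Q" "r \<in> R" by blast
  moreover then have "t * a = t * q + x * (t * r)" by (simp add: algebra_simps)
  ultimately show "t * a \<in> ?J" using submod_mult[OF Qs t] subring_mult[OF R t] by blast
qed

lemma one_mem_star_f_above_quasi_max:
  assumes R: "subring R" and st: "semistar R st" and Q: "quasi_max R (star_f R st) Q"
    and J: "ideal_of R J" "Q \<subseteq> J" "\<not> J \<subseteq> Q"
  shows "1 \<in> star_f R st J"
proof (rule ccontr)
  assume "1 \<notin> star_f R st J"
  moreover have "J \<noteq> {0}" using J(2) quasi_max_ideal(2,3)[OF Q] by blast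
  ultimately obtain Q' where Q': "quasi_max R (star_f R st) Q'" "J \<subseteq> Q'"
    using quasi_max_exists[OF R st J(1)] by blast
  then have "Q' = Q" using Q J(2) by (auto simp: quasi_max_def)
  then show False using J(3) Q'(2) by blast
qed

lemma quasi_max_prime:
  assumes R: "subring R" and st: "semistar R st" and Q: "quasi_max R (star_f R st) Q"
  shows "prime_of R Q"
proof -
  have Qi: "ideal_of R Q" "Q \<noteq> R" "star_f R st Q \<inter> R = Q"
    using Q by (auto simp: quasi_max_def quasi_ideal_def)
  have Qs: "submod R Q" using Qi by (simp add: ideal_of_def)
  have "y \<in> Q" if xy: "x \<in> R" "y \<in> R" "x * y \<in> Q" "x \<notin> Q" for x y
  proof (cases "y = 0")
    case True
    then show ?thesis using submod_0[OF Qs] by simp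
  next
    case False
    define J where "J = {q + x * r | q r. q \<in> Q \<and> r \<in> R}"
    have "Q \<subseteq> J" unfolding J_def using subring_0[OF R] by force
    moreover have "x \<in> J" unfolding J_def using subring_1[OF R] submod_0[OF Qs] by force
    moreover have "ideal_of R J" unfolding J_def by (rule ideal_add_principal[OF R Qi(1) xy(1)])
    ultimately have "1 \<in> star_f R st J"
      using xy(4) by (intro one_mem_star_f_above_quasi_max[OF R st Q]) auto
    then obtain G where G: "G \<in> fgF R" "G \<subseteq> J" "1 \<in> st G" by (rule star_f_memE)
    have "(*) y ` J \<subseteq> Q"
    proof
      fix z assume "z \<in> (*) y ` J"
      then obtain q r where qr: "z = y * (q + x * r)" "q \<in> Q" "r \<in> R"
        unfolding J_def by blast
      then have "z = y * q + r * (x * y)" by (simp add: algebra_simps)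
      then show "z \<in> Q" using qr xy submod_add[OF Qs] submod_mult[OF Qs] by auto
    qed
    then have "(*) y ` G \<subseteq> Q" using G(2) by blast
    moreover have "y \<in> st ((*) y ` G)"
      using semistar_mult[OF st False fgF_in_Fbar[OF G(1)]] G(3) by force
    ultimately have "y \<in> star_f R st Q"
      using image_mult_fgF[OF R G(1) False] by (blast intro: star_f_memI)
    then show ?thesis using Qi(3) xy(2) by blast
  qed
  then show ?thesis using Qi by (auto simp: prime_of_def)
qed

section \<open>Rings of fractions\<close>

definition mult_closed :: "'K::field set \<Rightarrow> 'K set \<Rightarrow> bool" where
  "mult_closed T S \<longleftrightarrow> S \<subseteq> T \<and> 1 \<in> S \<and> 0 \<notin> S \<and> (\<forall>a\<in>S. \<forall>b\<in>S. a * b \<in> S)"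

lemma fracsI: "t \<in> T \<Longrightarrow> s \<in> S \<Longrightarrow> z = t / s \<Longrightarrow> z \<in> fracs T S"
  unfolding fracs_def by blast

lemma fracsE:
  assumes "z \<in> fracs T S"
  obtains t s where "t \<in> T" "s \<in> S" "z = t / s"
  using assms unfolding fracs_def by auto

lemma subring_fracs:
  assumes T: "subring T" and S: "mult_closed T S"
  shows "subring (fracs T S)"
proof -
  have S1: "S \<subseteq> T" "1 \<in> S" "0 \<notin> S" "\<And>a b. a \<in> S \<Longrightarrow> b \<in> S \<Longrightarrow> a * b \<in> S"
    using S by (auto simp: mult_closed_def)
  have "0 \<in> fracs T S" using S1 subring_0[OF T] by (intro fracsI[of 0 T 1]) auto
  moreover have "1 \<in> fracs T S" using S1 subring_1[OF T] by (intro fracsI[of 1 T 1]) auto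
  moreover have "x + y \<in> fracs T S \<and> x - y \<in> fracs T S \<and> x * y \<in> fracs T S"
    if "x \<in> fracs T S" "y \<in> fracs T S" for x y
  proof -
    obtain a s where as: "a \<in> T" "s \<in> S" "x = a / s" using \<open>x \<in> fracs T S\<close> by (rule fracsE)
    obtain b t where bt: "b \<in> T" "t \<in> S" "y = b / t" using \<open>y \<in> fracs T S\<close> by (rule fracsE)
    have s0: "s \<noteq> 0" "t \<noteq> 0" and sT: "s \<in> T" "t \<in> T" and st: "s * t \<in> S"
      using as bt S1 by auto
    have "x + y = (a * t + b * s) / (s * t)" "x - y = (a * t - b * s) / (s * t)"
      "x * y = (a * b) / (s * t)"
      using s0 by (simp_all add: as bt field_simps)
    moreover have "a * t + b * s \<in> T" "a * t - b * s \<in> T" "a * b \<in> T"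
      using as bt sT T by (auto intro: subring_add subring_diff subring_mult)
    ultimately show ?thesis using st by (auto intro: fracsI)
  qed
  ultimately show ?thesis unfolding subring_def by blast
qed

lemma subset_fracs: "1 \<in> S \<Longrightarrow> T \<subseteq> fracs T S"
  by (auto intro: fracsI[where s = 1])

lemma fracs_mono: "T \<subseteq> T' \<Longrightarrow> S \<subseteq> S' \<Longrightarrow> fracs T S \<subseteq> fracs T' S'"
  unfolding fracs_def by blast

lemma inverse_mem_fracs: "1 \<in> T \<Longrightarrow> s \<in> S \<Longrightarrow> inverse s \<in> fracs T S"
  by (rule fracsI[of 1 T s]) (auto simp: field_simps)

lemma mult_closed_prime_compl:
  assumes "subring D" "prime_of D P"
  shows "mult_closed D (D - P)"
proof -
  have "1 \<notin> P" using assms ideal_eq_if_one_mem by (auto simp: prime_of_def)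
  moreover have "0 \<in> P" using assms by (auto simp: prime_of_def ideal_of_def submod_def)
  moreover have "a * b \<in> D - P" if "a \<in> D - P" "b \<in> D - P" for a b
    using that assms subring_mult[OF assms(1)] by (auto simp: prime_of_def)
  ultimately show ?thesis using subring_1[OF assms(1)] by (auto simp: mult_closed_def)
qed

lemma mult_closed_mono: "mult_closed D S \<Longrightarrow> D \<subseteq> T \<Longrightarrow> mult_closed T S"
  by (auto simp: mult_closed_def)

lemma fracs_prime_compl:
  assumes D: "subring D" and P: "prime_of D P" and T: "overring D T"
  shows "mult_closed T (D - P)" "subring (fracs T (D - P))" "T \<subseteq> fracs T (D - P)"
proof -
  have T': "subring T" "D \<subseteq> T" using T by (auto simp: overring_def)
  show M: "mult_closed T (D - P)" using mult_closed_mono[OF mult_closed_prime_compl[OF D P] T'(2)] .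
  show "subring (fracs T (D - P))" by (rule subring_fracs[OF T'(1) M])
  show "T \<subseteq> fracs T (D - P)" using M by (intro subset_fracs) (simp add: mult_closed_def)
qed

section \<open>Integral closure, seminormality and valuation rings\<close>

definition integral_over :: "'K::field set \<Rightarrow> 'K \<Rightarrow> bool" where
  "integral_over R x \<longleftrightarrow> (\<exists>p. lead_coeff p = 1 \<and> (\<forall>i. coeff p i \<in> R) \<and> poly p x = 0)"

lemma integrally_closed_iff: "integrally_closed R \<longleftrightarrow> (\<forall>x. integral_over R x \<longrightarrow> x \<in> R)"
  by (simp add: integrally_closed_def integral_over_def)

lemma integral_over_mono: "integral_over R x \<Longrightarrow> R \<subseteq> R' \<Longrightarrow> integral_over R' x"
  unfolding integral_over_def by blast

lemma poly_eq_sum_lower_plus_lead: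
  "poly p (x::'a::field) = (\<Sum>i<degree p. coeff p i * x ^ i) + lead_coeff p * x ^ degree p"
proof -
  have "{..degree p} = insert (degree p) {..<degree p}" by auto
  then show ?thesis by (simp add: poly_altdef add.commute)
qed

lemma integral_overI:
  assumes "\<And>i. i < n \<Longrightarrow> b i \<in> R" "0 \<in> R" "1 \<in> R" "x ^ n + (\<Sum>i<n. b i * x ^ i) = 0"
  shows "integral_over R x"
proof -
  define p where "p = monom 1 n + (\<Sum>i<n. monom (b i) i)"
  have coeff_p: "coeff p k = (if k = n then 1 else if k < n then b k else 0)" for k
    by (auto simp: p_def coeff_sum sum.delta)
  have "degree p = n"
    by (intro antisym degree_le le_degree) (simp_all add: coeff_p)
  then have "lead_coeff p = 1" by (simp add: coeff_p)
  moreover have "poly p x = 0" using assms(4) by (simp add: p_def poly_sum poly_monom)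
  moreover have "\<forall>i. coeff p i \<in> R" using assms(1-3) by (simp add: coeff_p)
  ultimately show ?thesis unfolding integral_over_def by blast
qed

lemma integral_overE:
  assumes "integral_over R x"
  obtains n b where "\<forall>i. b i \<in> R" "x ^ n + (\<Sum>i<n. b i * x ^ i) = 0"
proof -
  obtain p where p: "lead_coeff p = 1" "\<forall>i. coeff p i \<in> R" "poly p x = 0"
    using assms unfolding integral_over_def by blast
  show ?thesis using that[of "coeff p" "degree p"] p poly_eq_sum_lower_plus_lead[of p x]
    by (simp add: add.commute)
qed

lemma integrally_closed_Inter:
  assumes "\<And>R. R \<in> A \<Longrightarrow> integrally_closed R"
  shows "integrally_closed (\<Inter>A)"
  using assms integral_over_mono[of "\<Inter>A"] unfolding integrally_closed_iff by blast

lemma seminormal_if_integrally_closed: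
  assumes R: "subring R" and ic: "integrally_closed R"
  shows "seminormal R"
  unfolding seminormal_def
proof (intro allI impI)
  fix x :: 'a assume x: "x ^ 2 \<in> R \<and> x ^ 3 \<in> R"
  txt \<open>\<open>x\<close> is a root of \<open>X\<^sup>2 - x\<^sup>2\<close>.\<close>
  have "integral_over R x"
    by (rule integral_overI[of 2 "\<lambda>i. if i = 0 then - (x ^ 2) else 0"])
      (use x R in \<open>auto simp: subring_0 subring_1 subring_uminus numeral_2_eq_2\<close>)
  then show "x \<in> R" using ic by (simp add: integrally_closed_iff)
qed

definition valuation_ring :: "'K::field set \<Rightarrow> bool" where
  "valuation_ring W \<longleftrightarrow> subring W \<and> (\<forall>u. u \<noteq> 0 \<longrightarrow> u \<in> W \<or> inverse u \<in> W)"

lemma valuation_ring_mono: "valuation_ring W \<Longrightarrow> W \<subseteq> W' \<Longrightarrow> subring W' \<Longrightarrow> valuation_ring W'"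
  unfolding valuation_ring_def by blast

lemma integrally_closed_valuation_ring:
  assumes W: "valuation_ring W"
  shows "integrally_closed W"
  unfolding integrally_closed_iff
proof (intro allI impI)
  fix x assume "integral_over W x"
  then obtain n b where b: "\<forall>i. b i \<in> W" and eq: "x ^ n + (\<Sum>i<n. b i * x ^ i) = 0"
    by (rule integral_overE)
  have Ws: "subring W" using W by (simp add: valuation_ring_def)
  show "x \<in> W"
  proof (rule ccontr)
    assume xW: "x \<notin> W"
    then have x0: "x \<noteq> 0" using subring_0[OF Ws] by auto
    define y where "y = inverse x"
    have y: "y \<in> W" using W xW x0 by (auto simp: valuation_ring_def y_def)
    have xy: "x * y = 1" using x0 by (simp add: y_def)
    have n0: "n \<noteq> 0" using eq by (cases n) auto
    txt \<open>Multiplying the equation by \<open>y\<^sup>n\<^sup>-\<^sup>1\<close> expresses \<open>x\<close> as a polynomial in \<open>y\<close>.\<close>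
    have "x ^ i * y ^ (n - 1) = y ^ (n - 1 - i)" if "i < n" for i
    proof -
      have "y ^ (n - 1) = y ^ i * y ^ (n - 1 - i)" using that by (simp add: power_add[symmetric])
      then show ?thesis by (simp add: mult.assoc[symmetric] power_mult_distrib[symmetric] xy)
    qed
    then have "(\<Sum>i<n. b i * x ^ i) * y ^ (n - 1) = (\<Sum>i<n. b i * y ^ (n - 1 - i))"
      unfolding sum_distrib_right by (intro sum.cong) (simp_all add: mult.assoc)
    moreover have "x ^ n * y ^ (n - 1) = x"
    proof -
      have "x ^ n = x * x ^ (n - 1)" using n0 by (simp add: power_eq_if)
      then show ?thesis by (simp add: mult.assoc power_mult_distrib[symmetric] xy)
    qed
    moreover have "(x ^ n + (\<Sum>i<n. b i * x ^ i)) * y ^ (n - 1) = 0" using eq by simp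
    ultimately have "x = - (\<Sum>i<n. b i * y ^ (n - 1 - i))"
      by (simp add: distrib_right eq_neg_iff_add_eq_0)
    moreover have "(\<Sum>i<n. b i * y ^ (n - 1 - i)) \<in> W"
      using b y by (intro subring_sum[OF Ws] subring_mult[OF Ws] subring_power[OF Ws]) auto
    ultimately show False using xW subring_uminus[OF Ws] by auto
  qed
qed

definition unit_in :: "'K::field set \<Rightarrow> 'K \<Rightarrow> bool" where
  "unit_in V a \<longleftrightarrow> a \<in> V \<and> a \<noteq> 0 \<and> inverse a \<in> V"

definition local_ring :: "'K::field set \<Rightarrow> bool" where
  "local_ring V \<longleftrightarrow> (\<forall>a\<in>V. \<forall>b\<in>V. \<not> unit_in V a \<longrightarrow> \<not> unit_in V b \<longrightarrow> \<not> unit_in V (a + b))"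

lemma unit_in_uminus_iff: "subring V \<Longrightarrow> unit_in V (- a) \<longleftrightarrow> unit_in V a"
  using subring_uminus[of V "inverse a"] subring_uminus[of V "- inverse a"]
    subring_uminus[of V a] subring_uminus[of V "- a"]
  by (auto simp: unit_in_def inverse_minus_eq)

lemma integral_over_lead_coeff_mult_root:
  assumes V: "subring V" and q: "\<forall>i. coeff q i \<in> V" "poly q u = 0" "0 < degree q"
  shows "integral_over V (lead_coeff q * u)"
proof -
  define n where "n = degree q"
  define c where "c = lead_coeff q"
  have c: "c \<in> V" using q by (simp add: c_def)
  txt \<open>\<open>c\<^sup>n\<^sup>-\<^sup>1 q(u) = 0\<close> is a monic equation for \<open>c u\<close>.\<close>
  have lead_eq: "(c * u) ^ n = c ^ (n - 1) * (c * u ^ n)"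
  proof -
    have "c ^ n = c ^ (n - 1) * c" using q(3) by (simp add: n_def power_eq_if)
    then show ?thesis by (simp add: power_mult_distrib)
  qed
  have "coeff q i * c ^ (n - 1 - i) * (c * u) ^ i = c ^ (n - 1) * (coeff q i * u ^ i)"
    if "i < n" for i
  proof -
    have "c ^ (n - 1) = c ^ (n - 1 - i) * c ^ i" using that by (simp add: power_add[symmetric])
    then show ?thesis by (simp add: power_mult_distrib)
  qed
  then have "(\<Sum>i<n. coeff q i * c ^ (n - 1 - i) * (c * u) ^ i) = (\<Sum>i<n. c ^ (n - 1) * (coeff q i * u ^ i))"
    by (intro sum.cong) auto
  moreover have "poly q u = (\<Sum>i<n. coeff q i * u ^ i) + c * u ^ n"
    unfolding n_def c_def by (rule poly_eq_sum_lower_plus_lead)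
  ultimately have "(c * u) ^ n + (\<Sum>i<n. coeff q i * c ^ (n - 1 - i) * (c * u) ^ i) = c ^ (n - 1) * poly q u"
    using lead_eq by (simp only: sum_distrib_left[symmetric] distrib_left add.commute)
  then have "(c * u) ^ n + (\<Sum>i<n. coeff q i * c ^ (n - 1 - i) * (c * u) ^ i) = 0"
    using q(2) by simp
  moreover have "coeff q i * c ^ (n - 1 - i) \<in> V" for i
    using q(1) c by (intro subring_mult[OF V] subring_power[OF V]) auto
  ultimately have "integral_over V (c * u)"
    by (intro integral_overI[of n "\<lambda>i. coeff q i * c ^ (n - 1 - i)"]) (simp_all add: subring_0[OF V] subring_1[OF V])
  then show ?thesis by (simp add: c_def)
qed

lemma unit_in_add_nonunit:
  assumes V: "subring V" "local_ring V" and ab: "a \<in> V" "b \<in> V" "unit_in V a" "\<not> unit_in V b"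
  shows "unit_in V (a + b)"
proof (rule ccontr)
  assume "\<not> unit_in V (a + b)"
  moreover have "\<not> unit_in V (- b)" using ab(4) unit_in_uminus_iff[OF V(1)] by simp
  moreover have "a + b \<in> V" "- b \<in> V" using ab subring_add[OF V(1)] subring_uminus[OF V(1)] by auto
  ultimately have "\<not> unit_in V ((a + b) + - b)" using V(2) unfolding local_ring_def by blast
  then show False using ab(3) by simp
qed

lemma reduce_leading_term:
  fixes q :: "'a::field poly"
  assumes n0: "0 < degree q"
  obtains q' where "poly q' u = poly q u" "degree q' < degree q"
    "\<forall>k. coeff q' k = (if k = degree q then 0
      else if k = degree q - 1 then coeff q k + lead_coeff q * u else coeff q k)"
proof
  let ?n = "degree q"
  define q' where "q' = q - monom (lead_coeff q) ?n + monom (lead_coeff q * u) (?n - 1)"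
  have coeff_q': "coeff q' k = (if k = ?n then 0
      else if k = ?n - 1 then coeff q k + lead_coeff q * u else coeff q k)" for k
    using n0 by (auto simp: q'_def coeff_monom)
  then show "\<forall>k. coeff q' k = (if k = ?n then 0
      else if k = ?n - 1 then coeff q k + lead_coeff q * u else coeff q k)" by blast
  have "u ^ ?n = u * u ^ (?n - 1)" using n0 by (simp add: power_eq_if)
  then show "poly q' u = poly q u" by (simp add: q'_def poly_monom)
  have "degree q' \<le> ?n - 1" by (rule degree_le) (auto simp: coeff_q' coeff_eq_0)
  then show "degree q' < ?n" using n0 by simp
qed

lemma mem_or_inverse_mem_if_root:
  assumes V: "subring V" "local_ring V" "integrally_closed V"
  shows "\<forall>i. coeff q i \<in> V \<Longrightarrow> poly q u = 0 \<Longrightarrow> unit_in V (coeff q j) \<Longrightarrow> u \<in> V \<or> inverse u \<in> V"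
proof (induction "degree q" arbitrary: q j rule: less_induct)
  case less
  let ?c = "lead_coeff q"
  have n0: "0 < degree q"
  proof (rule ccontr)
    assume "\<not> 0 < degree q"
    then have "coeff q 0 = 0" using less(3) poly_eq_sum_lower_plus_lead[of q u] by simp
    then have "coeff q j = 0" using \<open>\<not> 0 < degree q\<close> coeff_eq_0[of q j] by (cases "j = 0") auto
    then show False using less(4) by (simp add: unit_in_def)
  qed
  have cu: "?c * u \<in> V"
    using integral_over_lead_coeff_mult_root[OF V(1) less(2,3) n0] V(3) by (simp add: integrally_closed_iff)
  consider "u = 0" | "unit_in V ?c" | "unit_in V (?c * u)"
    | "\<not> unit_in V ?c" "\<not> unit_in V (?c * u)"
    by blast
  then show ?case
  proof cases
    case 1
    then show ?thesis using subring_0[OF V(1)] by simp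
  next
    case 2
    then have "u = inverse ?c * (?c * u)" by (simp add: unit_in_def)
    then show ?thesis using 2 cu subring_mult[OF V(1)] by (metis unit_in_def)
  next
    case 3
    then have "inverse u = ?c * inverse (?c * u)" by (auto simp: unit_in_def)
    then show ?thesis using 3 less(2) subring_mult[OF V(1)] by (metis unit_in_def)
  next
    case 4
    txt \<open>Replace the leading term \<open>c X\<^sup>n\<close> by \<open>(c u) X\<^sup>n\<^sup>-\<^sup>1\<close>; locality of \<open>V\<close> keeps
      a unit coefficient.\<close>
    obtain q' where q': "poly q' u = poly q u" "degree q' < degree q"
      "\<forall>k. coeff q' k = (if k = degree q then 0
        else if k = degree q - 1 then coeff q k + ?c * u else coeff q k)"
      by (rule reduce_leading_term[OF n0, where u = u])
    have "\<forall>i. coeff q' i \<in> V"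
      using less(2) cu by (auto simp: q'(3) subring_0[OF V(1)] intro: subring_add[OF V(1)])
    moreover have "poly q' u = 0" using q'(1) less(3) by simp
    moreover have "j \<noteq> degree q" using 4 less(4) by auto
    then have "unit_in V (coeff q' j)"
      using unit_in_add_nonunit[OF V(1,2) _ cu less(4) 4(2)] less(2,4) n0 by (auto simp: q'(3))
    ultimately show ?thesis using less(1)[OF q'(2)] by blast
  qed
qed

lemma subring_poly_without_linear_term:
  assumes V: "subring V"
  shows "subring {poly p u | p. (\<forall>i. coeff p i \<in> V) \<and> coeff p 1 = 0}" (is "subring ?T")
proof -
  have V0: "0 \<in> V" and V1: "1 \<in> V" using V by (auto simp: subring_0 subring_1)
  have TI: "poly p u \<in> ?T" if "\<forall>i. coeff p i \<in> V" "coeff p 1 = 0" for p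
    using that by blast
  show ?thesis
    unfolding subring_def
  proof (intro conjI ballI)
    have "poly 0 u \<in> ?T" by (rule TI) (use V0 in auto)
    then show "0 \<in> ?T" by simp
    have "poly 1 u \<in> ?T" by (rule TI) (use V0 V1 in \<open>auto simp: coeff_1\<close>)
    then show "1 \<in> ?T" by simp
    fix x y assume "x \<in> ?T" "y \<in> ?T"
    then obtain p r where p: "x = poly p u" "\<forall>i. coeff p i \<in> V" "coeff p 1 = 0"
      and r: "y = poly r u" "\<forall>i. coeff r i \<in> V" "coeff r 1 = 0" by blast
    have "poly (p + r) u \<in> ?T" by (rule TI) (use p r V in \<open>auto intro: subring_add\<close>)
    then show "x + y \<in> ?T" using p r by simp
    have "poly (p - r) u \<in> ?T" by (rule TI) (use p r V in \<open>auto intro: subring_diff\<close>)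
    then show "x - y \<in> ?T" using p r by simp
    have "\<forall>i. coeff (p * r) i \<in> V"
      unfolding coeff_mult using p r by (auto intro!: subring_sum[OF V] subring_mult[OF V])
    moreover have "coeff (p * r) 1 = 0"
    proof -
      have "{..1::nat} = {0, 1}" by auto
      then show ?thesis using p r by (simp add: coeff_mult)
    qed
    ultimately have "poly (p * r) u \<in> ?T" by (rule TI)
    then show "x * y \<in> ?T" using p r by simp
  qed
qed

lemma valuation_ring_if_overrings_seminormal:
  assumes V: "subring V" "local_ring V" "integrally_closed V"
    and sn: "\<And>T. overring V T \<Longrightarrow> seminormal T"
  shows "valuation_ring V"
proof -
  have "u \<in> V \<or> inverse u \<in> V" for u
  proof -
    define T where "T = {poly p u | p. (\<forall>i. coeff p i \<in> V) \<and> coeff p 1 = 0}"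
    have TI: "poly p u \<in> T" if "\<forall>i. coeff p i \<in> V" "coeff p 1 = 0" for p
      unfolding T_def using that by blast
    have V0: "0 \<in> V" and V1: "1 \<in> V" using V by (auto simp: subring_0 subring_1)
    have "V \<subseteq> T"
    proof
      fix a assume "a \<in> V"
      then have "poly [:a:] u \<in> T" using V0 by (intro TI) (simp_all add: coeff_pCons split: nat.split)
      then show "a \<in> T" by simp
    qed
    moreover have "subring T" unfolding T_def by (rule subring_poly_without_linear_term[OF V(1)])
    ultimately have "seminormal T" by (intro sn) (simp add: overring_def)
    moreover have "poly (monom 1 2) u \<in> T" "poly (monom 1 3) u \<in> T"
      using V0 V1 by (intro TI; simp)+
    then have "u ^ 2 \<in> T" "u ^ 3 \<in> T" by (simp_all add: poly_monom)
    ultimately have "u \<in> T" unfolding seminormal_def by blast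
    then obtain p where u: "u = poly p u" and p: "\<forall>i. coeff p i \<in> V" "coeff p 1 = 0"
      unfolding T_def by blast
    txt \<open>\<open>u\<close> is a root of \<open>p - X\<close>, whose linear coefficient is the unit \<open>-1\<close>.\<close>
    define q where "q = p - monom 1 1"
    have "\<forall>i. coeff q i \<in> V"
      using p V0 V1 subring_uminus[OF V(1) V1] by (auto simp: q_def coeff_monom intro!: subring_diff[OF V(1)])
    moreover have "poly q u = 0" using u[symmetric] by (simp add: q_def poly_monom)
    moreover have "unit_in V (coeff q 1)"
      using p V1 subring_uminus[OF V(1) V1] by (simp add: q_def unit_in_def)
    ultimately show ?thesis by (rule mem_or_inverse_mem_if_root[OF V(1-3)])
  qed
  then show ?thesis using V by (simp add: valuation_ring_def)
qed

section \<open>Localizations at quasi-maximal ideals\<close>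

lemma subring_if_domain_with_qf: "domain_with_qf D \<Longrightarrow> subring D"
  by (simp add: domain_with_qf_def)

lemma domain_with_qfE:
  assumes "domain_with_qf D"
  obtains a b where "a \<in> D" "b \<in> D" "b \<noteq> 0" "x = a / b"
  using assms unfolding domain_with_qf_def by meson

lemma domain_with_qf_overring:
  assumes "domain_with_qf D" "overring D T"
  shows "domain_with_qf T"
  unfolding domain_with_qf_def
proof (intro conjI allI)
  show "subring T" using assms(2) by (simp add: overring_def)
  fix x
  obtain a b where "a \<in> D" "b \<in> D" "b \<noteq> 0" "x = a / b" using assms(1) by (rule domain_with_qfE)
  then show "\<exists>a\<in>T. \<exists>b\<in>T. b \<noteq> 0 \<and> x = a / b" using assms(2) by (auto simp: overring_def)
qed

lemma common_denominator:
  assumes D: "subring D" and M: "mult_closed D M" and A: "finite A" "A \<subseteq> fracs D M"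
  obtains m where "m \<in> M" "\<forall>a\<in>A. m * a \<in> D"
proof -
  have "\<exists>m\<in>M. \<forall>a\<in>A. m * a \<in> D"
    using A
  proof (induction A rule: finite_induct)
    case empty
    then show ?case using M by (auto simp: mult_closed_def)
  next
    case (insert a A)
    then obtain m where m: "m \<in> M" "\<forall>b\<in>A. m * b \<in> D" by blast
    obtain t s where ts: "t \<in> D" "s \<in> M" "a = t / s" using insert(4) by (auto elim: fracsE)
    have s: "s \<noteq> 0" "s \<in> D" "m * s \<in> M" using ts m M by (auto simp: mult_closed_def)
    have "(m * s) * a = m * t" using s ts by simp
    then have "(m * s) * a \<in> D" using m(1) M ts subring_mult[OF D] by (auto simp: mult_closed_def)
    moreover have "(m * s) * b \<in> D" if "b \<in> A" for b
    proof -
      have "s * (m * b) \<in> D" using m(2) that s(2) subring_mult[OF D] by blast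
      moreover have "(m * s) * b = s * (m * b)" by (simp add: algebra_simps)
      ultimately show ?thesis by metis
    qed
    ultimately show ?case using s(3) by blast
  qed
  then show ?thesis using that by blast
qed

lemma mem_colon_span:
  assumes D: "subring D" and x: "\<And>s. s \<in> S \<Longrightarrow> x * s \<in> D"
  shows "x \<in> colon D (span D S)"
  unfolding colon_def
proof (intro CollectI ballI)
  fix e assume "e \<in> span D S"
  then obtain c where c: "\<forall>s. c s \<in> D" "e = (\<Sum>s\<in>S. c s * s)" by (rule span_memE)
  have "x * e = (\<Sum>s\<in>S. c s * (x * s))" by (simp add: c sum_distrib_left algebra_simps)
  also have "\<dots> \<in> D" by (rule subring_sum[OF D], rule subring_mult[OF D]) (use c x in auto)
  finally show "x * e \<in> D" .
qed

lemma mult_span_notin: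
  assumes Q: "submod D Q" and f: "f \<in> span D S" "f * y \<notin> Q"
  shows "\<exists>s\<in>S. s * y \<notin> Q"
proof (rule ccontr)
  assume "\<not> (\<exists>s\<in>S. s * y \<notin> Q)"
  moreover obtain c where c: "\<forall>s. c s \<in> D" "f = (\<Sum>s\<in>S. c s * s)" using f(1) by (rule span_memE)
  moreover have "f * y = (\<Sum>s\<in>S. c s * (s * y))"
    unfolding c(2) sum_distrib_right by (simp add: algebra_simps)
  ultimately have "f * y \<in> Q" by (auto intro!: submod_sum[OF Q] intro: submod_mult[OF Q])
  then show False using f(2) by blast
qed

lemma valuation_ring_min_element:
  assumes W: "valuation_ring W" and S: "finite S" "\<exists>s\<in>S. s \<noteq> 0"
  obtains a where "a \<in> S" "a \<noteq> 0" "\<forall>s\<in>S. s / a \<in> W"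
proof -
  have Ws: "subring W" using W by (simp add: valuation_ring_def)
  have "\<exists>a\<in>S. a \<noteq> 0 \<and> (\<forall>s\<in>S. s / a \<in> W)"
    using S
  proof (induction S rule: finite_induct)
    case empty
    then show ?case by simp
  next
    case (insert b S)
    show ?case
    proof (cases "\<exists>s\<in>S. s \<noteq> 0")
      case False
      then have "b \<noteq> 0" using insert by auto
      then show ?thesis using False subring_0[OF Ws] subring_1[OF Ws] by auto
    next
      case True
      then obtain a where a: "a \<in> S" "a \<noteq> 0" "\<forall>s\<in>S. s / a \<in> W" using insert by blast
      show ?thesis
      proof (cases "b / a \<in> W")
        case True
        then show ?thesis using a by auto
      next
        case False
        then have b: "b \<noteq> 0" using subring_0[OF Ws] by auto
        then have "b / a \<noteq> 0" using a(2) by simp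
        then have "inverse (b / a) \<in> W" using W False unfolding valuation_ring_def by blast
        then have ab: "a / b \<in> W" by simp
        have "s / b \<in> W" if "s \<in> S" for s
        proof -
          have "(s / a) * (a / b) \<in> W" using a(3) that ab subring_mult[OF Ws] by blast
          then show ?thesis using a(2) by simp
        qed
        then show ?thesis using b subring_1[OF Ws] by auto
      qed
    qed
  qed
  then show ?thesis using that by blast
qed

lemma quasi_max_localization:
  assumes D: "subring D" and st: "semistar D st" and Q: "quasi_max D (star_f D st) Q"
  shows "mult_closed D (D - Q)" "subring (fracs D (D - Q))" "D \<subseteq> fracs D (D - Q)"
  using fracs_prime_compl[OF D quasi_max_prime[OF D st Q], of D] D by (simp_all add: overring_def)

lemma nonunit_localization_iff:
  assumes D: "subring D" and P: "prime_of D P"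
  shows "a \<in> fracs D (D - P) \<and> \<not> unit_in (fracs D (D - P)) a \<longleftrightarrow>
    (\<exists>x s. x \<in> P \<and> s \<in> D - P \<and> a = x / s)" (is "_ \<and> \<not> unit_in ?V a \<longleftrightarrow> _")
proof
  have Ps: "submod D P" "0 \<in> P" "P \<subseteq> D" using P by (auto simp: prime_of_def ideal_of_def submod_def)
  assume a: "a \<in> ?V \<and> \<not> unit_in ?V a"
  obtain x s where xs: "x \<in> D" "s \<in> D - P" "a = x / s" using conjunct1[OF a] by (rule fracsE)
  have "x \<in> P"
  proof (rule ccontr)
    assume "x \<notin> P"
    then have "inverse a \<in> ?V" "a \<noteq> 0" using xs Ps(2) by (auto intro!: fracsI[of s D x])
    then show False using a by (simp add: unit_in_def)
  qed
  then show "\<exists>x s. x \<in> P \<and> s \<in> D - P \<and> a = x / s" using xs by blast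
next
  have Ps: "submod D P" "0 \<in> P" "P \<subseteq> D" using P by (auto simp: prime_of_def ideal_of_def submod_def)
  assume "\<exists>x s. x \<in> P \<and> s \<in> D - P \<and> a = x / s"
  then obtain x s where xs: "x \<in> P" "s \<in> D - P" "a = x / s" by blast
  then have "a \<in> ?V" using Ps(3) by (auto intro: fracsI)
  moreover have "\<not> unit_in ?V a"
  proof
    assume "unit_in ?V a"
    then have a0: "a \<noteq> 0" "inverse a \<in> ?V" by (auto simp: unit_in_def)
    obtain y t where yt: "y \<in> D" "t \<in> D - P" "inverse a = y / t" using a0(2) by (rule fracsE)
    have "x \<noteq> 0" "s \<noteq> 0" "t \<noteq> 0" using a0 xs yt Ps(2) by auto
    moreover have "s / x = y / t" using xs(3) yt(3) by simp
    ultimately have "s * t = x * y" by (simp add: field_simps)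
    moreover have "x * y \<in> P" using submod_mult[OF Ps(1) yt(1) xs(1)] by (simp add: mult.commute)
    ultimately show False using P xs(2) yt(2) by (auto simp: prime_of_def)
  qed
  ultimately show "a \<in> ?V \<and> \<not> unit_in ?V a" by blast
qed

lemma local_ring_localization:
  assumes D: "subring D" and P: "prime_of D P"
  shows "local_ring (fracs D (D - P))"
  unfolding local_ring_def
proof (intro ballI impI)
  let ?V = "fracs D (D - P)"
  have Ps: "submod D P" "0 \<in> P" using P by (auto simp: prime_of_def ideal_of_def submod_def)
  fix a b assume "a \<in> ?V" "b \<in> ?V" "\<not> unit_in ?V a" "\<not> unit_in ?V b"
  then obtain x s y t where xs: "x \<in> P" "s \<in> D - P" "a = x / s" and yt: "y \<in> P" "t \<in> D - P" "b = y / t"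
    using nonunit_localization_iff[OF D P] by meson
  have "s \<noteq> 0" "t \<noteq> 0" using xs yt Ps(2) by auto
  then have "a + b = (t * x + s * y) / (s * t)" using xs yt by (simp add: field_simps)
  moreover have "t * x + s * y \<in> P" using xs yt by (auto intro!: submod_add[OF Ps(1)] submod_mult[OF Ps(1)])
  moreover have "s * t \<in> D - P"
    using mult_closed_prime_compl[OF D P] xs yt by (auto simp: mult_closed_def)
  ultimately show "\<not> unit_in ?V (a + b)" using nonunit_localization_iff[OF D P] by blast
qed

lemma not_subset_quasi_max:
  assumes "subring D" "quasi_max D (star_f D st) Q" "1 \<in> star_f D st E"
  shows "\<not> E \<subseteq> Q"
proof
  assume "E \<subseteq> Q"
  then have "1 \<in> star_f D st Q" using assms(3) star_f_mono by blast
  then show False using one_notin_star_f_quasi_max[OF assms(1,2)] by blast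
qed

definition valuation_localizations :: "'K::field set \<Rightarrow> ('K set \<Rightarrow> 'K set) \<Rightarrow> bool" where
  "valuation_localizations D st \<longleftrightarrow>
     (\<forall>Q. quasi_max D (star_f D st) Q \<longrightarrow> valuation_ring (fracs D (D - Q)))"

section \<open>P\<open>\<star>\<close>MDs\<close>

lemma ideal_setprod_colon:
  assumes Dq: "domain_with_qf D" and F: "F \<in> fgF D"
  shows "ideal_of D (setprod F (colon D F))" "setprod F (colon D F) \<noteq> {0}"
proof -
  have D: "subring D" using Dq by (rule subring_if_domain_with_qf)
  have "setprod F (colon D F) \<subseteq> D"
    by (rule setprod_subset[OF submod_subring[OF D]]) (auto simp: colon_def mult.commute)
  then show "ideal_of D (setprod F (colon D F))"
    using submod_setprod[OF submod_fgF[OF F]] by (simp add: ideal_of_def)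
  obtain S s0 where S: "finite S" "F = span D S" "s0 \<in> S" "s0 \<noteq> 0" using fgF_E[OF D F] .
  have S_fracs: "S \<subseteq> fracs D (D - {0})"
  proof
    fix s assume "s \<in> S"
    obtain a b where "a \<in> D" "b \<in> D" "b \<noteq> 0" "s = a / b" using Dq by (rule domain_with_qfE)
    then show "s \<in> fracs D (D - {0})" by (intro fracsI[of a D b]) auto
  qed
  have "mult_closed D (D - {0})"
    using D by (auto simp: mult_closed_def subring_1 subring_mult)
  then obtain m where m: "m \<in> D - {0}" "\<forall>s\<in>S. m * s \<in> D"
    by (rule common_denominator[OF D _ S(1) S_fracs])
  have "m \<in> colon D F" unfolding S(2) using m by (intro mem_colon_span[OF D]) auto
  then have "s0 * m \<in> setprod F (colon D F)"
    using S mem_span[OF D S(1)] by (intro mult_mem_setprod) auto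
  moreover have "s0 * m \<noteq> 0" using S(4) m(1) by simp
  ultimately show "setprod F (colon D F) \<noteq> {0}" by blast
qed

lemma one_mem_star_f_setprod_colon:
  assumes Dq: "domain_with_qf D" and st: "semistar D st" and V: "valuation_localizations D st"
    and F: "F \<in> fgF D"
  shows "1 \<in> star_f D st (setprod F (colon D F))" (is "1 \<in> star_f D st ?E")
proof (rule ccontr)
  assume "1 \<notin> star_f D st ?E"
  have D: "subring D" using Dq by (rule subring_if_domain_with_qf)
  then obtain Q where Q: "quasi_max D (star_f D st) Q" "?E \<subseteq> Q"
    using quasi_max_exists[OF D st ideal_setprod_colon[OF Dq F]] \<open>1 \<notin> star_f D st ?E\<close> by blast
  obtain S s0 where S: "finite S" "F = span D S" "s0 \<in> S" "s0 \<noteq> 0" using fgF_E[OF D F] .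
  txt \<open>Dividing by a generator \<open>a\<close> of least value in \<open>D\<^sub>Q\<close> and clearing denominators
    outside \<open>Q\<close> yields an element of \<open>F\<^sup>-\<^sup>1\<close> whose product with \<open>a\<close> avoids \<open>Q\<close>.\<close>
  have VQ: "valuation_ring (fracs D (D - Q))" using V Q(1) by (simp add: valuation_localizations_def)
  obtain a where a: "a \<in> S" "a \<noteq> 0" "\<forall>s\<in>S. s / a \<in> fracs D (D - Q)"
    using valuation_ring_min_element[OF VQ S(1)] S(3,4) by blast
  have "(\<lambda>s. s / a) ` S \<subseteq> fracs D (D - Q)" using a by blast
  then obtain t where t: "t \<in> D - Q" "\<forall>z\<in>(\<lambda>s. s / a) ` S. t * z \<in> D"
    by (rule common_denominator[OF D quasi_max_localization(1)[OF D st Q(1)] finite_imageI[OF S(1)]])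
  have "t / a \<in> colon D F"
    unfolding S(2) using t(2) by (intro mem_colon_span[OF D]) (auto simp: algebra_simps)
  then have "a * (t / a) \<in> ?E" using S a(1) mem_span[OF D S(1)] by (intro mult_mem_setprod) auto
  then have "t \<in> ?E" using a(2) by simp
  then show False using Q(2) t(1) by blast
qed

lemma PstarMD_if_valuation_localizations:
  assumes Dq: "domain_with_qf D" and st: "semistar D st" and V: "valuation_localizations D st"
  shows "PstarMD D st"
  unfolding PstarMD_def
proof
  fix F assume F: "F \<in> fgF D"
  have D: "subring D" using Dq by (rule subring_if_domain_with_qf)
  define E where "E = setprod F (colon D F)"
  have ED: "E \<subseteq> D" using ideal_setprod_colon(1)[OF Dq F] by (simp add: E_def ideal_of_def)
  obtain G where G: "G \<in> fgF D" "G \<subseteq> E" "1 \<in> st G"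
    using one_mem_star_f_setprod_colon[OF Dq st V F] unfolding E_def[symmetric] by (rule star_f_memE)
  have "st G = st D" using semistar_eq_if_one_mem[OF D st fgF_in_Fbar[OF G(1)] _ G(3)] G ED by blast
  then have "st D \<subseteq> star_f D st E" using G unfolding star_f_def by blast
  moreover have "star_f D st E \<subseteq> st D" by (rule star_f_subset_semistar[OF D st ED])
  ultimately show "star_f D st (setprod F (colon D F)) = st D" by (simp add: E_def)
qed

lemma valuation_localizations_if_PstarMD:
  assumes Dq: "domain_with_qf D" and st: "semistar D st" and P: "PstarMD D st"
  shows "valuation_localizations D st"
  unfolding valuation_localizations_def
proof (intro allI impI)
  fix Q assume Q: "quasi_max D (star_f D st) Q"
  have D: "subring D" using Dq by (rule subring_if_domain_with_qf)
  have Qs: "submod D Q" using quasi_max_ideal(1)[OF Q] by (simp add: ideal_of_def)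
  have "u \<in> fracs D (D - Q) \<or> inverse u \<in> fracs D (D - Q)" if "u \<noteq> 0" for u
  proof -
    obtain a b where ab: "a \<in> D" "b \<in> D" "b \<noteq> 0" "u = a / b" using Dq by (rule domain_with_qfE)
    txt \<open>\<open>(a, b)(a, b)\<^sup>-\<^sup>1\<close> is not inside \<open>Q\<close>, so \<open>a y \<notin> Q\<close> or \<open>b y \<notin> Q\<close> for some
      \<open>y \<in> (a, b)\<^sup>-\<^sup>1\<close>, and \<open>u = a y / b y\<close>.\<close>
    define F where "F = span D {a, b}"
    have F: "F \<in> fgF D" unfolding F_def by (rule span_in_fgF[OF D _ _ ab(3)]) auto
    have "1 \<in> star_f D st (setprod F (colon D F))"
      using P F one_mem_semistar[OF D st] by (simp add: PstarMD_def)
    then have "\<not> setprod F (colon D F) \<subseteq> Q" by (rule not_subset_quasi_max[OF D Q])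
    then obtain f y where fy: "f \<in> F" "y \<in> colon D F" "f * y \<notin> Q"
      using setprod_subset[OF Qs] by blast
    have "a \<in> F" "b \<in> F" unfolding F_def using mem_span[OF D] by auto
    then have abyD: "a * y \<in> D" "b * y \<in> D" using fy(2) by (auto simp: colon_def mult.commute)
    have "a * y \<notin> Q \<or> b * y \<notin> Q" using mult_span_notin[OF Qs fy(1)[unfolded F_def] fy(3)] by auto
    then show ?thesis
    proof
      assume "a * y \<notin> Q"
      then have "a * y \<noteq> 0" using quasi_max_ideal(2)[OF Q] by auto
      then have "inverse u = (b * y) / (a * y)" using ab by simp
      then show ?thesis using abyD \<open>a * y \<notin> Q\<close> by (auto intro: fracsI)
    next
      assume "b * y \<notin> Q"
      then have "b * y \<noteq> 0" using quasi_max_ideal(2)[OF Q] by auto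
      then have "u = (a * y) / (b * y)" using ab by simp
      then show ?thesis using abyD \<open>b * y \<notin> Q\<close> by (auto intro: fracsI)
    qed
  qed
  then show "valuation_ring (fracs D (D - Q))"
    using quasi_max_localization(2)[OF D st Q] by (simp add: valuation_ring_def)
qed

lemma PstarMD_iff_valuation_localizations:
  "domain_with_qf D \<Longrightarrow> semistar D st \<Longrightarrow> PstarMD D st \<longleftrightarrow> valuation_localizations D st"
  using PstarMD_if_valuation_localizations valuation_localizations_if_PstarMD by blast

section \<open>Overrings\<close>

lemma semistar_d_op: "semistar T (d_op T)"
  by (simp add: semistar_def d_op_def)

lemma t_linked_if_linked_d_op: "linked D st T (d_op T) \<Longrightarrow> t_linked D st T"
  by (simp add: linked_def t_linked_def d_op_def)

lemma setprod_subring_right: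
  assumes "subring D" "submod D F"
  shows "setprod F D = F"
proof
  show "setprod F D \<subseteq> F"
    by (rule setprod_subset[OF assms(2)]) (metis submod_mult[OF assms(2)] mult.commute)
  show "F \<subseteq> setprod F D"
    using mult_mem_setprod[of _ F 1 D] subring_1[OF assms(1)] by force
qed

lemma linked_self: "subring D \<Longrightarrow> linked D st D st"
  unfolding linked_def using setprod_subring_right submod_fgF by metis

lemma stilde_eq:
  assumes T: "subring T" and st': "semistar T st'"
  shows "stilde T st' T = \<Inter>{fracs T (T - N) | N. quasi_max T (star_f T st') N}"
proof -
  have "setprod T (fracs T (T - N)) = fracs T (T - N)" if "quasi_max T (star_f T st') N" for N
    using quasi_max_localization(2,3)[OF T st' that] subring_1[OF T] by (rule setprod_subring_eq)
  then show ?thesis unfolding stilde_def by (intro arg_cong[where f = Inter]) auto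
qed

lemma subring_stilde: "subring T \<Longrightarrow> semistar T st' \<Longrightarrow> subring (stilde T st' T)"
  unfolding stilde_eq by (intro subring_Inter) (auto intro: quasi_max_localization(2))

lemma subset_stilde: "subring T \<Longrightarrow> semistar T st' \<Longrightarrow> T \<subseteq> stilde T st' T"
  unfolding stilde_eq using quasi_max_localization(3) by blast

lemma ell_op_eq:
  assumes D: "subring D" and T: "overring D T"
  shows "ell_op D st T T = \<Inter>{fracs T (D - P) | P. quasi_prime D (star_f D st) P}"
proof -
  have "setprod T (fracs T (D - P)) = fracs T (D - P)" if "quasi_prime D (star_f D st) P" for P
    using that fracs_prime_compl(2,3)[OF D _ T, of P] subring_1[of T] T
    by (intro setprod_subring_eq) (auto simp: quasi_prime_def overring_def)
  then show ?thesis unfolding ell_op_def by (intro arg_cong[where f = Inter]) auto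
qed

lemma ideal_denominators: "subring T \<Longrightarrow> ideal_of T {t \<in> T. t * x \<in> T}"
  unfolding ideal_of_def submod_def
  by (auto simp: subring_0 subring_add subring_mult distrib_right mult.assoc)

lemma stilde_d_op:
  assumes Tq: "domain_with_qf T"
  shows "stilde T (d_op T) T = T"
proof
  have T: "subring T" using Tq by (rule subring_if_domain_with_qf)
  show "T \<subseteq> stilde T (d_op T) T" by (rule subset_stilde[OF T semistar_d_op])
  show "stilde T (d_op T) T \<subseteq> T"
  proof
    fix x assume x: "x \<in> stilde T (d_op T) T"
    define J where "J = {t \<in> T. t * x \<in> T}"
    have J: "ideal_of T J" unfolding J_def by (rule ideal_denominators[OF T])
    obtain a b where ab: "a \<in> T" "b \<in> T" "b \<noteq> 0" "x = a / b" using Tq by (rule domain_with_qfE)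
    then have "b \<in> J" by (simp add: J_def)
    then have "J \<noteq> {0}" using ab(3) by blast
    show "x \<in> T"
    proof (rule ccontr)
      assume "x \<notin> T"
      then have "1 \<notin> J" by (simp add: J_def)
      moreover have "star_f T (d_op T) J \<subseteq> J" by (auto simp: d_op_def elim: star_f_memE)
      ultimately obtain N where N: "quasi_max T (star_f T (d_op T)) N" "J \<subseteq> N"
        using quasi_max_exists[OF T semistar_d_op J \<open>J \<noteq> {0}\<close>] by blast
      have "x \<in> fracs T (T - N)" using x N(1) unfolding stilde_eq[OF T semistar_d_op] by blast
      then obtain t s where ts: "t \<in> T" "s \<in> T - N" "x = t / s" by (rule fracsE)
      moreover have "s \<noteq> 0" using ts(2) quasi_max_ideal(2)[OF N(1)] by auto
      ultimately have "s \<in> J" by (simp add: J_def)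
      then show False using N(2) ts(2) by blast
    qed
  qed
qed

lemma linked_d_op_above_localization:
  assumes D: "subring D" and st: "semistar D st" and Q: "quasi_max D (star_f D st) Q"
    and T: "overring D T" "fracs D (D - Q) \<subseteq> T"
  shows "linked D st T (d_op T)"
  unfolding linked_def d_op_def
proof (intro allI impI)
  fix F assume F: "F \<in> fgF D \<and> F \<subseteq> D \<and> st F = st D"
  have T': "subring T" "D \<subseteq> T" using T by (auto simp: overring_def)
  have "1 \<in> star_f D st F" using F one_mem_semistar[OF D st] by (auto intro: star_f_memI)
  then have "\<not> F \<subseteq> Q" by (rule not_subset_quasi_max[OF D Q])
  then obtain f where f: "f \<in> F" "f \<notin> Q" by blast
  have "f \<in> D" "f \<noteq> 0" using f F quasi_max_ideal(2)[OF Q] by auto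
  then have fi: "inverse f \<in> T" using inverse_mem_fracs[OF subring_1[OF D], of f "D - Q"] f T by auto
  show "setprod F T = T"
  proof
    show "setprod F T \<subseteq> T"
      by (rule setprod_subset[OF submod_subring[OF T'(1)]]) (use F T' in \<open>auto intro: subring_mult\<close>)
    show "T \<subseteq> setprod F T"
    proof
      fix t assume "t \<in> T"
      then have "f * (inverse f * t) \<in> setprod F T"
        using f fi T' by (intro mult_mem_setprod) (auto intro: subring_mult)
      then show "t \<in> setprod F T" using \<open>f \<noteq> 0\<close> by (simp add: mult.assoc[symmetric])
    qed
  qed
qed

lemma ell_op_eq_self_above_localization:
  assumes D: "subring D" and st: "semistar D st" and Q: "quasi_max D (star_f D st) Q"
    and T: "overring D T" "fracs D (D - Q) \<subseteq> T"
  shows "ell_op D st T T = T"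
proof
  have T': "subring T" "D \<subseteq> T" using T by (auto simp: overring_def)
  have QP: "prime_of D Q" by (rule quasi_max_prime[OF D st Q])
  have "quasi_prime D (star_f D st) Q" using Q QP by (simp add: quasi_prime_def quasi_max_def)
  then have "ell_op D st T T \<subseteq> fracs T (D - Q)" unfolding ell_op_eq[OF D T(1)] by blast
  also have "fracs T (D - Q) \<subseteq> T"
  proof
    fix z assume "z \<in> fracs T (D - Q)"
    then obtain t s where ts: "t \<in> T" "s \<in> D - Q" "z = t / s" by (rule fracsE)
    have "inverse s \<in> T" using inverse_mem_fracs[OF subring_1[OF D] ts(2)] T(2) by blast
    then show "z \<in> T" using ts subring_mult[OF T'(1)] by (simp add: divide_inverse)
  qed
  finally show "ell_op D st T T \<subseteq> T" .
  show "T \<subseteq> ell_op D st T T"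
    unfolding ell_op_eq[OF D T(1)] using fracs_prime_compl(3)[OF D _ T(1)]
    by (auto simp: quasi_prime_def)
qed

lemma integral_over_mult_denominator:
  assumes D: "subring D" and m: "m \<in> D" and b: "\<forall>i<n. m * b i \<in> D"
    and eq: "x ^ n + (\<Sum>i<n. b i * x ^ i) = 0"
  shows "integral_over D (m * x)"
proof (rule integral_overI[of n "\<lambda>i. b i * m ^ (n - i)"])
  show "b i * m ^ (n - i) \<in> D" if "i < n" for i
  proof -
    have "b i * m ^ (n - i) = (m * b i) * m ^ (n - i - 1)"
      using that by (simp add: power_eq_if algebra_simps)
    then show ?thesis using b that subring_mult[OF D] subring_power[OF D m] by metis
  qed
  show "0 \<in> D" "1 \<in> D" using D by (auto simp: subring_0 subring_1)
  have "b i * m ^ (n - i) * (m * x) ^ i = m ^ n * (b i * x ^ i)" if "i < n" for i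
  proof -
    have "m ^ n = m ^ (n - i) * m ^ i" using that by (simp add: power_add[symmetric])
    then show ?thesis by (simp add: power_mult_distrib algebra_simps)
  qed
  then have "(\<Sum>i<n. b i * m ^ (n - i) * (m * x) ^ i) = (\<Sum>i<n. m ^ n * (b i * x ^ i))"
    by (intro sum.cong) auto
  then have "(m * x) ^ n + (\<Sum>i<n. b i * m ^ (n - i) * (m * x) ^ i) = m ^ n * (x ^ n + (\<Sum>i<n. b i * x ^ i))"
    by (simp only: sum_distrib_left[symmetric] distrib_left power_mult_distrib)
  then show "(m * x) ^ n + (\<Sum>i<n. b i * m ^ (n - i) * (m * x) ^ i) = 0" using eq by simp
qed

lemma integrally_closed_localization:
  assumes D: "subring D" and st: "semistar D st" and Q: "quasi_max D (star_f D st) Q"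
    and ic: "integrally_closed (stilde D st D)"
  shows "integrally_closed (fracs D (D - Q))"
  unfolding integrally_closed_iff
proof (intro allI impI)
  let ?V = "fracs D (D - Q)"
  note loc = quasi_max_localization[OF D st Q]
  fix x assume "integral_over ?V x"
  then obtain n b where b: "\<forall>i. b i \<in> ?V" and eq: "x ^ n + (\<Sum>i<n. b i * x ^ i) = 0"
    by (rule integral_overE)
  have "b ` {..<n} \<subseteq> ?V" using b by blast
  then obtain m where m: "m \<in> D - Q" "\<forall>a\<in>b ` {..<n}. m * a \<in> D"
    by (rule common_denominator[OF D loc(1) finite_imageI[OF finite_lessThan]])
  then have "integral_over D (m * x)"
    using eq by (intro integral_over_mult_denominator[OF D]) auto
  then have "m * x \<in> stilde D st D"
    using ic integral_over_mono[OF _ subset_stilde[OF D st]] by (simp add: integrally_closed_iff)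
  then have "m * x \<in> ?V" using Q unfolding stilde_eq[OF D st] by blast
  moreover have "inverse m \<in> ?V" using inverse_mem_fracs[OF subring_1[OF D] m(1)] .
  ultimately have "inverse m * (m * x) \<in> ?V" using subring_mult[OF loc(2)] by blast
  moreover have "m \<noteq> 0" using m(1) quasi_max_ideal(2)[OF Q] by auto
  ultimately show "x \<in> ?V" by (simp add: mult.assoc[symmetric])
qed

lemma contraction_nonzero:
  assumes Dq: "domain_with_qf D" and T: "D \<subseteq> T" and I: "submod T I" "I \<noteq> {0}"
  shows "I \<inter> D \<noteq> {0}"
proof -
  obtain n where n: "n \<in> I" "n \<noteq> 0" using I submod_0 by blast
  obtain a b where ab: "a \<in> D" "b \<in> D" "b \<noteq> 0" "n = a / b" using Dq by (rule domain_with_qfE)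
  have "b * n \<in> I" using submod_mult[OF I(1) _ n(1)] ab(2) T by blast
  moreover have "b * n = a" "a \<noteq> 0" using ab n(2) by auto
  ultimately show ?thesis using ab(1) by auto
qed

lemma linked_star_f_contraction:
  assumes D: "subring D" and st: "semistar D st" and T: "overring D T" and L: "linked D st T st'"
    and I: "submod T I" and one: "1 \<in> star_f D st (I \<inter> D)"
  obtains G where "G \<in> fgF T" "G \<subseteq> I" "st' G = st' T"
proof -
  have T': "subring T" "D \<subseteq> T" using T by (auto simp: overring_def)
  obtain G where G: "G \<in> fgF D" "G \<subseteq> I \<inter> D" "1 \<in> st G" using one by (rule star_f_memE)
  have "st G = st D" using semistar_eq_if_one_mem[OF D st fgF_in_Fbar[OF G(1)] _ G(3)] G(2) by blast
  then have "st' (setprod G T) = st' T" using L G by (simp add: linked_def)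
  moreover obtain S s where S: "finite S" "G = span D S" "s \<in> S" "s \<noteq> 0" using fgF_E[OF D G(1)] .
  then have "setprod G T \<in> fgF T"
    using setprod_span[OF D T'] span_in_fgF[OF T'(1)] by simp
  moreover have "setprod G T \<subseteq> I"
    by (rule setprod_subset[OF I]) (use G(2) in \<open>metis IntD1 subsetD submod_mult[OF I] mult.commute\<close>)
  ultimately show ?thesis using that by blast
qed

lemma valuation_ring_fracs_if_quasi_max:
  assumes D: "subring D" and V: "valuation_localizations D st" and Q: "quasi_max D (star_f D st) Q"
    and T: "overring D T" and S: "mult_closed T S" "D - Q \<subseteq> S"
  shows "valuation_ring (fracs T S)"
proof (rule valuation_ring_mono)
  show "valuation_ring (fracs D (D - Q))" using V Q by (simp add: valuation_localizations_def)
  show "fracs D (D - Q) \<subseteq> fracs T S" using T S(2) by (intro fracs_mono) (auto simp: overring_def)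
  show "subring (fracs T S)" using T S(1) by (intro subring_fracs) (auto simp: overring_def)
qed

lemma valuation_ring_localization_if_linked:
  assumes Dq: "domain_with_qf D" and st: "semistar D st" and V: "valuation_localizations D st"
    and T: "overring D T" and st': "semistar T st'" and L: "linked D st T st'"
    and N: "quasi_max T (star_f T st') N"
  shows "valuation_ring (fracs T (T - N))"
proof -
  have D: "subring D" using Dq by (rule subring_if_domain_with_qf)
  have T': "subring T" "D \<subseteq> T" using T by (auto simp: overring_def)
  have NI: "ideal_of T N" "N \<noteq> {0}" using quasi_max_ideal[OF N] by auto
  then have Ns: "submod T N" by (simp add: ideal_of_def)
  have "1 \<notin> star_f D st (N \<inter> D)"
  proof
    assume "1 \<in> star_f D st (N \<inter> D)"
    then obtain G where G: "G \<in> fgF T" "G \<subseteq> N" "st' G = st' T"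
      by (rule linked_star_f_contraction[OF D st T L Ns])
    then have "1 \<in> star_f T st' N" using one_mem_semistar[OF T'(1) st'] by (auto intro: star_f_memI)
    then show False using one_notin_star_f_quasi_max[OF T'(1) N] by blast
  qed
  then obtain Q where Q: "quasi_max D (star_f D st) Q" "N \<inter> D \<subseteq> Q"
    using quasi_max_exists[OF D st ideal_contraction[OF NI(1) D T'(2)]
        contraction_nonzero[OF Dq T'(2) Ns NI(2)]] by blast
  have "mult_closed T (T - N)"
    by (rule mult_closed_prime_compl[OF T'(1) quasi_max_prime[OF T'(1) st' N]])
  moreover have "D - Q \<subseteq> T - N" using Q(2) T'(2) by blast
  ultimately show ?thesis by (rule valuation_ring_fracs_if_quasi_max[OF D V Q(1) T])
qed

lemma integrally_closed_stilde_if_linked: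
  assumes Dq: "domain_with_qf D" and st: "semistar D st" and V: "valuation_localizations D st"
    and T: "overring D T" and st': "semistar T st'" and L: "linked D st T st'"
  shows "integrally_closed (stilde T st' T)"
  unfolding stilde_eq[OF conjunct1[OF T[unfolded overring_def]] st']
  using integrally_closed_valuation_ring valuation_ring_localization_if_linked[OF assms]
  by (auto intro!: integrally_closed_Inter)

lemma valuation_ring_fracs_quasi_prime:
  assumes D: "subring D" and st: "semistar D st" and V: "valuation_localizations D st"
    and T: "overring D T" and P: "quasi_prime D (star_f D st) P"
  shows "valuation_ring (fracs T (D - P))"
proof -
  have PI: "ideal_of D P" "P \<noteq> {0}" "star_f D st P \<inter> D = P" "prime_of D P"
    using P by (auto simp: quasi_prime_def quasi_ideal_def)
  have "1 \<notin> star_f D st P"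
    using PI subring_1[OF D] ideal_eq_if_one_mem by (auto simp: prime_of_def)
  then obtain Q where Q: "quasi_max D (star_f D st) Q" "P \<subseteq> Q"
    using quasi_max_exists[OF D st PI(1,2)] by blast
  show ?thesis
    using Q(2) by (intro valuation_ring_fracs_if_quasi_max[OF D V Q(1) T] fracs_prime_compl(1)[OF D PI(4) T]) auto
qed

lemma integrally_closed_ell_op:
  assumes D: "subring D" and st: "semistar D st" and V: "valuation_localizations D st"
    and T: "overring D T"
  shows "integrally_closed (ell_op D st T T)"
  unfolding ell_op_eq[OF D T]
  using integrally_closed_valuation_ring valuation_ring_fracs_quasi_prime[OF assms]
  by (auto intro!: integrally_closed_Inter)

lemma one_mem_t_op:
  assumes T: "subring T"
  shows "1 \<in> t_op T T"
  unfolding t_op_def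
proof (rule star_f_memI)
  show "span T {1} \<in> fgF T" by (rule span_in_fgF[OF T]) auto
  show "span T {1} \<subseteq> T" by (rule span_subset[OF submod_subring[OF T]]) (simp add: subring_1[OF T])
  have "1 \<in> span T {1}" by (rule mem_span[OF T]) auto
  then show "1 \<in> v_op T (span T {1})" by (auto simp: v_op_def colon_def)
qed

lemma v_op_mono: "A \<subseteq> B \<Longrightarrow> v_op T A \<subseteq> v_op T B"
  unfolding v_op_def colon_def by blast

lemma v_op_denominators:
  "v_op T {t \<in> T. t * x \<in> T} \<subseteq> {t \<in> T. t * x \<in> T}" (is "v_op T ?J \<subseteq> ?J")
proof
  fix z assume z: "z \<in> v_op T ?J"
  have "1 \<in> colon T ?J" "x \<in> colon T ?J" by (auto simp: colon_def mult.commute)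
  then have "z * 1 \<in> T" "z * x \<in> T"
    using z unfolding v_op_def colon_def[of T "colon T ?J"] by blast+
  then show "z \<in> ?J" by simp
qed

lemma one_mem_star_f_denominators:
  assumes Dq: "domain_with_qf D" and st: "semistar D st" and V: "valuation_localizations D st"
    and T: "overring D T" and x: "integral_over T x"
  shows "1 \<in> star_f D st ({t \<in> T. t * x \<in> T} \<inter> D)" (is "1 \<in> star_f D st (?J \<inter> D)")
proof (rule ccontr)
  assume n1: "1 \<notin> star_f D st (?J \<inter> D)"
  have D: "subring D" using Dq by (rule subring_if_domain_with_qf)
  have T': "subring T" "D \<subseteq> T" using T by (auto simp: overring_def)
  obtain a b where ab: "a \<in> D" "b \<in> D" "b \<noteq> 0" "x = a / b" using Dq by (rule domain_with_qfE)
  then have "b \<in> ?J \<inter> D" using T'(2) by auto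
  then have "?J \<inter> D \<noteq> {0}" using ab(3) by blast
  then obtain Q where Q: "quasi_max D (star_f D st) Q" "?J \<inter> D \<subseteq> Q"
    using quasi_max_exists[OF D st ideal_contraction[OF ideal_denominators[OF T'(1)] D T'(2)] _ n1]
    by blast
  note W = fracs_prime_compl[OF D quasi_max_prime[OF D st Q(1)] T]
  have "valuation_ring (fracs T (D - Q))"
    using W(1) by (rule valuation_ring_fracs_if_quasi_max[OF D V Q(1) T]) simp
  then have "x \<in> fracs T (D - Q)"
    using integral_over_mono[OF x W(3)] integrally_closed_valuation_ring
    unfolding integrally_closed_iff by blast
  then obtain t s where ts: "t \<in> T" "s \<in> D - Q" "x = t / s" by (rule fracsE)
  moreover have "s \<noteq> 0" using ts(2) quasi_max_ideal(2)[OF Q(1)] by auto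
  ultimately have "s \<in> ?J \<inter> D" using T'(2) by auto
  then show False using Q(2) ts(2) by blast
qed

lemma integrally_closed_if_t_linked:
  assumes Dq: "domain_with_qf D" and st: "semistar D st" and V: "valuation_localizations D st"
    and T: "overring D T" and L: "t_linked D st T"
  shows "integrally_closed T"
  unfolding integrally_closed_iff
proof (intro allI impI)
  fix x assume x: "integral_over T x"
  have D: "subring D" using Dq by (rule subring_if_domain_with_qf)
  have T': "subring T" using T by (simp add: overring_def)
  define J where "J = {t \<in> T. t * x \<in> T}"
  have "submod T J" using ideal_denominators[OF T'] by (simp add: J_def ideal_of_def)
  moreover have "1 \<in> star_f D st (J \<inter> D)"
    unfolding J_def by (rule one_mem_star_f_denominators[OF Dq st V T x])
  ultimately obtain G where G: "G \<in> fgF T" "G \<subseteq> J" "t_op T G = t_op T T"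
    by (rule linked_star_f_contraction[OF D st T L[unfolded t_linked_def]])
  txt \<open>\<open>J\<close> is a \<open>v\<close>-ideal, so \<open>1 \<in> G\<^sup>t \<subseteq> J\<^sup>t = J\<close>.\<close>
  then have "1 \<in> star_f T (v_op T) G" using one_mem_t_op[OF T'] by (simp add: t_op_def)
  then obtain H where "H \<subseteq> G" "1 \<in> v_op T H" by (rule star_f_memE)
  moreover have "v_op T H \<subseteq> v_op T J" using \<open>H \<subseteq> G\<close> G(2) by (intro v_op_mono) blast
  moreover have "v_op T J \<subseteq> J" unfolding J_def by (rule v_op_denominators)
  ultimately have "1 \<in> J" by blast
  then show "x \<in> T" by (simp add: J_def)
qed

lemma overring_localization_iff:
  assumes D: "subring D" and st: "semistar D st" and Q: "quasi_max D (star_f D st) Q"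
  shows "overring (fracs D (D - Q)) T \<longleftrightarrow> overring D T \<and> fracs D (D - Q) \<subseteq> T"
  using quasi_max_localization(3)[OF D st Q] by (auto simp: overring_def)

lemma valuation_localizations_if_seminormal:
  assumes Dq: "domain_with_qf D" and st: "semistar D st"
    and ic: "\<And>Q. quasi_max D (star_f D st) Q \<Longrightarrow> integrally_closed (fracs D (D - Q))"
    and sn: "\<And>Q T. quasi_max D (star_f D st) Q \<Longrightarrow> overring D T \<Longrightarrow> fracs D (D - Q) \<subseteq> T \<Longrightarrow> seminormal T"
  shows "valuation_localizations D st"
  unfolding valuation_localizations_def
proof (intro allI impI)
  fix Q assume Q: "quasi_max D (star_f D st) Q"
  have D: "subring D" using Dq by (rule subring_if_domain_with_qf)
  show "valuation_ring (fracs D (D - Q))"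
    by (rule valuation_ring_if_overrings_seminormal[OF quasi_max_localization(2)[OF D st Q]
          local_ring_localization[OF D quasi_max_prime[OF D st Q]] ic[OF Q]])
      (use sn[OF Q] overring_localization_iff[OF D st Q] in blast)
qed

lemma valuation_localizations_if_overrings_integrally_closed:
  assumes Dq: "domain_with_qf D" and st: "semistar D st"
    and ic: "\<And>Q T. quasi_max D (star_f D st) Q \<Longrightarrow> overring D T \<Longrightarrow> fracs D (D - Q) \<subseteq> T \<Longrightarrow> integrally_closed T"
  shows "valuation_localizations D st"
proof (rule valuation_localizations_if_seminormal[OF Dq st])
  have D: "subring D" using Dq by (rule subring_if_domain_with_qf)
  show "integrally_closed (fracs D (D - Q))" if "quasi_max D (star_f D st) Q" for Q
    using ic[OF that] quasi_max_localization(2,3)[OF D st that] by (simp add: overring_def)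
  show "seminormal T" if "quasi_max D (star_f D st) Q" "overring D T" "fracs D (D - Q) \<subseteq> T" for Q T
    by (intro seminormal_if_integrally_closed ic[OF that]) (use that(2) in \<open>simp add: overring_def\<close>)
qed

theorem theorem5p3:
  fixes D :: "'K::field set" and st :: "'K set \<Rightarrow> 'K set"
  assumes "domain_with_qf D" and "semistar D st"
  defines "c1 \<equiv> \<forall>T st'. overring D T \<and> semistar T st' \<and> linked D st T st'
                     \<longrightarrow> integrally_closed (stilde T st' T)"
      and "c2 \<equiv> \<forall>T. overring D T \<longrightarrow> integrally_closed (ell_op D st T T)"
      and "c3 \<equiv> \<forall>T. overring D T \<and> t_linked D st T \<longrightarrow> integrally_closed T"
      and "c4 \<equiv> \<forall>T. overring D T \<and> linked D st T (d_op T) \<longrightarrow> integrally_closed T"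
      and "c5 \<equiv> integrally_closed (stilde D st D) \<and>
                 (\<forall>T st'. overring D T \<and> semistar T st' \<and> linked D st T st'
                     \<longrightarrow> seminormal (stilde T st' T))"
      and "c6 \<equiv> integrally_closed (stilde D st D) \<and>
                 (\<forall>T. overring D T \<and> t_linked D st T \<longrightarrow> seminormal T)"
      and "c7 \<equiv> integrally_closed (stilde D st D) \<and>
                 (\<forall>T. overring D T \<and> linked D st T (d_op T) \<longrightarrow> seminormal T)"
      and "c8 \<equiv> PstarMD D st"
  shows "(c1 \<longleftrightarrow> c8) \<and> (c2 \<longleftrightarrow> c8) \<and> (c3 \<longleftrightarrow> c8) \<and> (c4 \<longleftrightarrow> c8)
       \<and> (c5 \<longleftrightarrow> c8) \<and> (c6 \<longleftrightarrow> c8) \<and> (c7 \<longleftrightarrow> c8)"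
proof -
  note Dq = assms(1) and st = assms(2)
  have D: "subring D" using Dq by (rule subring_if_domain_with_qf)
  define V where "V = valuation_localizations D st"
  have "c8 \<longleftrightarrow> V"
    unfolding c8_def V_def by (rule PstarMD_iff_valuation_localizations[OF Dq st])
  moreover have V_c1: "V \<Longrightarrow> c1" and "V \<Longrightarrow> c2" and V_c3: "V \<Longrightarrow> c3"
    unfolding V_def c1_def c2_def c3_def
    using integrally_closed_stilde_if_linked[OF Dq st] integrally_closed_ell_op[OF D st]
      integrally_closed_if_t_linked[OF Dq st] by blast+
  moreover have tilde: "c1 \<Longrightarrow> integrally_closed (stilde D st D)"
    unfolding c1_def using D st linked_self[OF D] by (simp add: overring_def)
  moreover have "c1 \<Longrightarrow> c5"
    unfolding c5_def using tilde
    by (auto simp: c1_def overring_def intro!: seminormal_if_integrally_closed subring_stilde)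
  moreover have "V \<Longrightarrow> c6"
    unfolding c6_def using tilde V_c1 V_c3 seminormal_if_integrally_closed
    by (auto simp: c3_def overring_def)
  moreover have "c3 \<Longrightarrow> c4" and "c6 \<Longrightarrow> c7"
    unfolding c3_def c4_def c6_def c7_def using t_linked_if_linked_d_op by blast+
  moreover have "c5 \<Longrightarrow> c7"
    unfolding c5_def c7_def using semistar_d_op stilde_d_op[OF domain_with_qf_overring[OF Dq]] by metis
  moreover have "c7 \<Longrightarrow> V" and "c4 \<Longrightarrow> V" and "c2 \<Longrightarrow> V"
    unfolding c7_def c4_def c2_def V_def
    using valuation_localizations_if_seminormal[OF Dq st] integrally_closed_localization[OF D st]
      valuation_localizations_if_overrings_integrally_closed[OF Dq st]
      linked_d_op_above_localization[OF D st] ell_op_eq_self_above_localization[OF D st]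
    by (blast, blast, metis)
  ultimately show ?thesis by blast
qed

end
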